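(* Up to a sequence of orthogonal transformations on the Gaussian ensemble noise vectors (which preserve their joint law), the sample variances of the EnKF satisfy $$\widehat p_n=\Big(\frac{p_n}{1+Sp_n}\Big)^2\frac SN\,\widehat\chi^{(n)},\qquad p_{n+1}=\frac RN\,\chi^{(n+1)},\qquad p_0=\frac{P_0}N\chi^{(0)},$$ where $\chi^{(0)}$ is a (central) $\chi$-square variable with $N$ degrees of freedom and, conditionally on the past, $\widehat\chi^{(n)}$ is a non-central $\chi$-square variable with $N$ degrees of freedom and non-centrality parameter $N/(Sp_n)$, and $\chi^{(n+1)}$ is a non-central $\chi$-square variable with $N$ degrees of freedom and non-centrality parameter $N(A^2/R)\widehat p_n$, these $\chi$-square variables being (conditionally) independent of one another and independent of the local mean perturbations $\upsilon_0$, $(\widehat\upsilon_k,\upsilon_{k+1})_{k\ge0}$.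
   Context: Model: nonzero reals $A,B,C,D$, $R:=B^2$, $S:=(C/D)^2$; $(V_n),(W_n)$ i.i.d. $N(0,1)$, $X_0\sim N(\widehat X_0^-,P_0)$ ($P_0>0$) independent, $X_{n+1}=AX_n+BW_{n+1}$, $Y_n=CX_n+DV_n$. EnKF with $N+1$ particles: $\xi^i_0$ i.i.d. copies of $X_0$; independent i.i.d. $N(0,1)$ families $(V^i_n),(W^i_n)$ independent of the model; $m_n$ sample mean, $p_n:=\frac1N\sum_{i=1}^{N+1}(\xi^i_n-m_n)^2$, $g_n:=Cp_n/(C^2p_n+D^2)$, $\widehat\xi^i_n:=\xi^i_n+g_n(Y_n-C\xi^i_n-DV^i_n)$, with sample mean $\widehat m_n$ and $\widehat p_n:=\frac1N\sum_i(\widehat\xi^i_n-\widehat m_n)^2$, $\xi^i_{n+1}:=A\widehat\xi^i_n+BW^i_{n+1}$. Mean perturbations: $\upsilon_0:=\sqrt{N+1}(m_0-\widehat X_0^-)$, $\widehat\upsilon_n:=\sqrt{N+1}(\widehat m_n-m_n-g_n(Y_n-Cm_n))$, $\upsilon_{n+1}:=\sqrt{N+1}(m_{n+1}-A\widehat m_n)$. A non-central $\chi$-square variable with $N$ degrees of freedom and non-centrality $Nx$ has the law of $\sum_{i=1}^N(Z_i+\sqrt x)^2$, $Z_i$ i.i.d. $N(0,1)$. *)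

theory Defs
  imports "HOL-Probability.Probability"
begin

(* Indices of the primitive random sources:
   SX0 = X_0, SV n = V_n, SW n = W_n (n >= 1), SXi i = xi^i_0,
   SEV n i = V^i_n, SEW n i = W^i_n (n >= 1).  Particles are indexed 0..N. *)
datatype src = SX0 | SV nat | SW nat | SXi nat | SEV nat nat | SEW nat nat

(* Indices of the output family:
   IZ0 i   : i-th Gaussian in chi^(0)
   IZh n i : i-th Gaussian in hat chi^(n)
   IZ n i  : i-th Gaussian in chi^(n+1)
   IU0     : upsilon_0
   IEta n  : normalised ensemble observation-noise mean (hat upsilon_n = - g_n D eta_n)
   IU n    : upsilon_(n+1) *)
datatype zidx = IZ0 nat | IZh nat nat | IZ nat nat | IU0 | IEta nat | IU nat

definition smean :: "nat \<Rightarrow> (nat \<Rightarrow> real) \<Rightarrow> real" where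
  "smean N x = (\<Sum>i<Suc N. x i) / real (Suc N)"

definition svar :: "nat \<Rightarrow> (nat \<Rightarrow> real) \<Rightarrow> real" where
  "svar N x = (\<Sum>i<Suc N. (x i - smean N x)^2) / real N"

definition gain :: "real \<Rightarrow> real \<Rightarrow> real \<Rightarrow> real" where
  "gain C D p = C * p / (C^2 * p + D^2)"

definition enkf_update :: "nat \<Rightarrow> real \<Rightarrow> real \<Rightarrow> real \<Rightarrow> (nat \<Rightarrow> real) \<Rightarrow> (nat \<Rightarrow> real) \<Rightarrow> nat \<Rightarrow> real" where
  "enkf_update N C D y v x = (\<lambda>i. x i + gain C D (svar N x) * (y - C * x i - D * v i))"

fun model_X :: "real \<Rightarrow> real \<Rightarrow> ('a \<Rightarrow> real) \<Rightarrow> (nat \<Rightarrow> 'a \<Rightarrow> real) \<Rightarrow> nat \<Rightarrow> 'a \<Rightarrow> real" where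
  "model_X A B X0 W 0 \<omega> = X0 \<omega>"
| "model_X A B X0 W (Suc n) \<omega> = A * model_X A B X0 W n \<omega> + B * W (Suc n) \<omega>"

definition model_Y :: "real \<Rightarrow> real \<Rightarrow> real \<Rightarrow> real \<Rightarrow> ('a \<Rightarrow> real) \<Rightarrow> (nat \<Rightarrow> 'a \<Rightarrow> real)
    \<Rightarrow> (nat \<Rightarrow> 'a \<Rightarrow> real) \<Rightarrow> nat \<Rightarrow> 'a \<Rightarrow> real" where
  "model_Y A B C D X0 W V n \<omega> = C * model_X A B X0 W n \<omega> + D * V n \<omega>"

fun enkf_xi :: "nat \<Rightarrow> real \<Rightarrow> real \<Rightarrow> real \<Rightarrow> real \<Rightarrow> (nat \<Rightarrow> real) \<Rightarrow> (nat \<Rightarrow> real)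
    \<Rightarrow> (nat \<Rightarrow> nat \<Rightarrow> real) \<Rightarrow> (nat \<Rightarrow> nat \<Rightarrow> real) \<Rightarrow> nat \<Rightarrow> nat \<Rightarrow> real" where
  "enkf_xi N A B C D xi0 Y EV EW 0 = xi0"
| "enkf_xi N A B C D xi0 Y EV EW (Suc n) =
     (\<lambda>i. A * enkf_update N C D (Y n) (EV n) (enkf_xi N A B C D xi0 Y EV EW n) i + B * EW (Suc n) i)"


definition ens_xi where
  "ens_xi N A B C D X0 V W xi0 EV EW n \<omega> =
     enkf_xi N A B C D (\<lambda>i. xi0 i \<omega>) (\<lambda>k. model_Y A B C D X0 W V k \<omega>)
       (\<lambda>k i. EV k i \<omega>) (\<lambda>k i. EW k i \<omega>) n"

definition ens_xih where
  "ens_xih N A B C D X0 V W xi0 EV EW n \<omega> =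
     enkf_update N C D (model_Y A B C D X0 W V n \<omega>) (\<lambda>i. EV n i \<omega>)
       (ens_xi N A B C D X0 V W xi0 EV EW n \<omega>)"

definition ens_m where "ens_m N A B C D X0 V W xi0 EV EW n \<omega> = smean N (ens_xi N A B C D X0 V W xi0 EV EW n \<omega>)"
definition ens_mh where "ens_mh N A B C D X0 V W xi0 EV EW n \<omega> = smean N (ens_xih N A B C D X0 V W xi0 EV EW n \<omega>)"
definition ens_p where "ens_p N A B C D X0 V W xi0 EV EW n \<omega> = svar N (ens_xi N A B C D X0 V W xi0 EV EW n \<omega>)"
definition ens_ph where "ens_ph N A B C D X0 V W xi0 EV EW n \<omega> = svar N (ens_xih N A B C D X0 V W xi0 EV EW n \<omega>)"
definition ens_g where "ens_g N A B C D X0 V W xi0 EV EW n \<omega> = gain C D (ens_p N A B C D X0 V W xi0 EV EW n \<omega>)"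

(* mean perturbations: upsilon_0, hat upsilon_n, and ens_u n = upsilon_(n+1) *)
definition ens_u0 where
  "ens_u0 N A B C D Xh0 X0 V W xi0 EV EW \<omega> =
     sqrt (real (Suc N)) * (ens_m N A B C D X0 V W xi0 EV EW 0 \<omega> - Xh0)"
definition ens_uh where
  "ens_uh N A B C D X0 V W xi0 EV EW n \<omega> =
     sqrt (real (Suc N)) * (ens_mh N A B C D X0 V W xi0 EV EW n \<omega> - ens_m N A B C D X0 V W xi0 EV EW n \<omega>
       - ens_g N A B C D X0 V W xi0 EV EW n \<omega> * (model_Y A B C D X0 W V n \<omega> - C * ens_m N A B C D X0 V W xi0 EV EW n \<omega>))"
definition ens_u where
  "ens_u N A B C D X0 V W xi0 EV EW n \<omega> =
     sqrt (real (Suc N)) * (ens_m N A B C D X0 V W xi0 EV EW (Suc n) \<omega> - A * ens_mh N A B C D X0 V W xi0 EV EW n \<omega>)"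

end

theory Submission
  imports Defs
begin

text \<open>
  Every step of the filter (the initial sampling, each analysis and each forecast) produces an
  ensemble of the form \<open>c (G + a) + d\<close>: \<open>G\<close> is a fresh standard Gaussian vector of
  \<open>N + 1\<close> coordinates, independent of everything computed before, while the centred vector
  \<open>a\<close> and the scalars \<open>c, d\<close> are functions of the past. Rotating \<open>G\<close> by an
  orthogonal map \<open>O\<^sub>a\<close>, chosen from the past so that it sends the diagonal direction to the
  last axis and \<open>a\<close> to a multiple of \<open>(1, \<dots>, 1, 0)\<close>, gives an innovation
  \<open>Z = O\<^sub>a G\<close> that is again standard Gaussian and independent of the past; hence the
  innovations of all steps are jointly independent. The last coordinate of \<open>Z\<close> is the
  normalised mean of \<open>G\<close>, which yields the mean perturbations, and the sample variance of
  the ensemble becomes \<open>c\<^sup>2/N \<Sum>\<^sub>i\<^sub><\<^sub>N (Z\<^sub>i + |a|/\<surd>N)\<^sup>2\<close>, a non-central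
  \<open>\<chi>\<^sup>2\<close> variable.

  The maps \<open>O\<^sub>a\<close> are products of Givens rotations, and a planar rotation preserves the
  standard Gaussian because it is a product of three shears, each of which preserves Lebesgue
  measure.
\<close>

section \<open>Planar rotations preserve the standard Gaussian\<close>

lemma lborel_pair_shear_snd:
  fixes f :: "real \<Rightarrow> real"
  assumes [measurable]: "f \<in> borel_measurable borel"
  shows "distr (lborel \<Otimes>\<^sub>M lborel) (borel \<Otimes>\<^sub>M borel) (\<lambda>(u, v). (u, v + f u)) = lborel \<Otimes>\<^sub>M lborel"
    (is "distr ?L _ ?T = _")
proof (rule measure_eqI)
  fix A assume "A \<in> sets (distr ?L (borel \<Otimes>\<^sub>M borel) ?T)"
  then have A: "A \<in> sets ?L" by simp
  have mT: "?T \<in> measurable ?L (borel \<Otimes>\<^sub>M borel)"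
    by measurable
  have "emeasure (distr ?L (borel \<Otimes>\<^sub>M borel) ?T) A = emeasure ?L (?T -` A \<inter> space ?L)"
    using A by (simp add: emeasure_distr[OF mT])
  also have "\<dots> = (\<integral>\<^sup>+u. emeasure lborel (Pair u -` (?T -` A \<inter> space ?L)) \<partial>lborel)"
    by (rule lborel.emeasure_pair_measure_alt) (use measurable_sets[OF mT] A in auto)
  also have "\<dots> = (\<integral>\<^sup>+u. emeasure lborel (Pair u -` A) \<partial>lborel)"
  proof (rule nn_integral_cong)
    fix u :: real
    have fibre: "Pair u -` A \<in> sets borel" using A by (auto intro: sets_Pair1)
    have eq: "Pair u -` (?T -` A \<inter> space ?L) = (+) (f u) -` (Pair u -` A) \<inter> space lborel"
      by (auto simp: space_pair_measure add.commute)
    show "emeasure lborel (Pair u -` (?T -` A \<inter> space ?L)) = emeasure lborel (Pair u -` A)"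
      unfolding eq by (subst emeasure_distr[symmetric, where N=borel])
        (use fibre in \<open>auto simp: lborel_distr_plus\<close>)
  qed
  also have "\<dots> = emeasure ?L A"
    by (rule lborel.emeasure_pair_measure_alt[symmetric]) (use A in auto)
  finally show "emeasure (distr ?L (borel \<Otimes>\<^sub>M borel) ?T) A = emeasure ?L A" .
qed simp

lemma lborel_pair_shear_fst:
  fixes f :: "real \<Rightarrow> real"
  assumes [measurable]: "f \<in> borel_measurable borel"
  shows "distr (lborel \<Otimes>\<^sub>M lborel) (borel \<Otimes>\<^sub>M borel) (\<lambda>(u, v). (u + f v, v)) = lborel \<Otimes>\<^sub>M lborel"
proof -
  let ?L = "lborel \<Otimes>\<^sub>M lborel :: (real \<times> real) measure" and ?B
      = "borel \<Otimes>\<^sub>M borel :: (real \<times> real) measure"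
  let ?swap = "\<lambda>(x :: real, y :: real). (y, x)"
  have swap: "distr ?L ?B ?swap = ?L"
    by (subst (2) lborel_pair.distr_pair_swap) (rule distr_cong; simp)
  have "(\<lambda>(u, v). (u + f v, v)) = ?swap \<circ> (\<lambda>(u, v). (u, v + f u)) \<circ> ?swap"
    by (auto simp: fun_eq_iff)
  then have "distr ?L ?B (\<lambda>(u, v). (u + f v, v))
      = distr (distr (distr ?L ?B ?swap) ?B (\<lambda>(u, v). (u, v + f u))) ?B ?swap"
    by (simp add: distr_distr comp_assoc)
  also have "\<dots> = ?L"
    by (simp add: swap lborel_pair_shear_snd cong: distr_cong)
  finally show ?thesis .
qed

lemma lborel_pair_reflect:
  fixes a b :: real
  assumes "a \<in> {-1, 1}" "b \<in> {-1, 1}"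
  shows "distr (lborel \<Otimes>\<^sub>M lborel) (borel \<Otimes>\<^sub>M borel) (\<lambda>(u, v). (a * u, b * v)) = lborel \<Otimes>\<^sub>M lborel"
proof -
  have reflect: "distr lborel borel (\<lambda>x. c * x) = (lborel :: real measure)" if "c \<in> {-1, 1}" for c :: real
  proof -
    have "(\<lambda>x. c * x) = uminus \<or> (\<lambda>x. c * x) = (\<lambda>x::real. x)" using that by auto
    then show ?thesis using lborel_distr_uminus distr_id2[of borel lborel] by auto
  qed
  have "distr lborel borel (\<lambda>x. a * x) \<Otimes>\<^sub>M distr lborel borel (\<lambda>x. b * x) =
     distr (lborel \<Otimes>\<^sub>M lborel) (borel \<Otimes>\<^sub>M borel) (\<lambda>(u, v). (a * u, b * v))"
    by (rule pair_measure_distr) (auto simp: reflect[OF assms(2)] intro: sigma_finite_lborel)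
  then show ?thesis using reflect assms by simp
qed

lemma lborel_pair_rotation:
  fixes c s :: real
  assumes cs: "c\<^sup>2 + s\<^sup>2 = 1"
  shows "distr (lborel \<Otimes>\<^sub>M lborel) (borel \<Otimes>\<^sub>M borel) (\<lambda>(u, v). (c * u - s * v, s * u + c * v))
    = lborel \<Otimes>\<^sub>M lborel"
proof (cases "c = -1")
  case True
  then have "s = 0" using cs by (simp add: power2_eq_square)
  then show ?thesis using True lborel_pair_reflect[of "-1" "-1"] by simp
next
  case False
  then have c1: "1 + c \<noteq> 0" by linarith
  \<comment> \<open>A rotation is the product of three shears: with \<open>t = - s / (1 + c)\<close> one has \<open>1 + s t = c\<close>.\<close>
  define t where "t = - s / (1 + c)"
  define sh1 where "sh1 = (\<lambda>(u :: real, v :: real). (u + t * v, v))"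
  define sh2 where "sh2 = (\<lambda>(u :: real, v :: real). (u, v + s * u))"
  have [measurable]: "sh1 \<in> measurable (borel \<Otimes>\<^sub>M borel) (borel \<Otimes>\<^sub>M borel)"
    "sh2 \<in> measurable (borel \<Otimes>\<^sub>M borel) (borel \<Otimes>\<^sub>M borel)"
    unfolding sh1_def sh2_def by measurable
  have st: "1 + s * t = c"
  proof -
    have "1 + s * t = ((1 + c) - s\<^sup>2) / (1 + c)" using c1
      by (simp add: t_def field_simps power2_eq_square)
    also have "\<dots> = c" using cs c1 by (simp add: power2_eq_square field_simps)
    finally show ?thesis .
  qed
  have tc: "t * (1 + c) = - s" using c1 by (simp add: t_def)
  have "(\<lambda>(u, v). (c * u - s * v, s * u + c * v)) = sh1 \<circ> sh2 \<circ> sh1"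
  proof (intro ext, clarify)
    fix u v :: real
    have "u + t * v + t * (v + s * (u + t * v)) = (1 + s * t) * u + t * (1 + (1 + s * t)) * v"
      "v + s * (u + t * v) = s * u + (1 + s * t) * v"
      by (simp_all add: algebra_simps)
    then show "(c * u - s * v, s * u + c * v) = (sh1 \<circ> sh2 \<circ> sh1) (u, v)"
      unfolding sh1_def sh2_def st tc by simp
  qed
  moreover have "distr (lborel \<Otimes>\<^sub>M lborel) (borel \<Otimes>\<^sub>M borel) (sh1 \<circ> sh2 \<circ> sh1)
      = distr (distr (distr (lborel \<Otimes>\<^sub>M lborel) (borel \<Otimes>\<^sub>M borel) sh1) (borel \<Otimes>\<^sub>M borel) sh2)
          (borel \<Otimes>\<^sub>M borel) sh1"
    by (subst distr_distr; (subst distr_distr)?) (auto simp: comp_assoc)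
  ultimately show ?thesis
    unfolding sh1_def sh2_def by (simp add: lborel_pair_shear_fst lborel_pair_shear_snd
        cong: distr_cong)
qed

definition std_normal :: "real measure" where
  "std_normal = density lborel std_normal_density"

lemma prob_space_std_normal: "prob_space std_normal"
  unfolding std_normal_def using real_dist_normal_dist by (simp add: real_distribution_def)

lemma sigma_finite_std_normal: "sigma_finite_measure std_normal"
  by (simp add: prob_space_std_normal prob_space_imp_sigma_finite)

lemma sets_std_normal [simp, measurable_cong]: "sets std_normal = sets borel"
  and space_std_normal [simp]: "space std_normal = UNIV"
  by (simp_all add: std_normal_def)

lemma std_normal_density_mult_rotation:
  fixes a b u v :: real
  assumes "a\<^sup>2 + b\<^sup>2 = u\<^sup>2 + v\<^sup>2"
  shows "std_normal_density a * std_normal_density b = std_normal_density u * std_normal_density v"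
proof -
  have "std_normal_density x * std_normal_density y = (1 / sqrt (2 * pi))\<^sup>2
      * exp (- (x\<^sup>2 + y\<^sup>2) / 2)" for x y
    by (simp add: std_normal_density_def power2_eq_square exp_add[symmetric] field_simps)
  then show ?thesis using assms by simp
qed

lemma std_normal_pair_rotation:
  fixes c s e :: real
  assumes cs: "c\<^sup>2 + s\<^sup>2 = 1" and e: "e \<in> {-1, 1}"
  shows "distr (std_normal \<Otimes>\<^sub>M std_normal) (borel \<Otimes>\<^sub>M borel)
      (\<lambda>(u, v). (c * u - s * v, e * (s * u + c * v)))
    = std_normal \<Otimes>\<^sub>M std_normal"
proof -
  define T where "T = (\<lambda>(u :: real, v :: real). (c * u - s * v, e * (s * u + c * v)))"
  define f where "f = (\<lambda>(x :: real, y :: real). ennreal (std_normal_density x)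
      * ennreal (std_normal_density y))"
  have [measurable]: "T \<in> measurable (borel \<Otimes>\<^sub>M borel) (borel \<Otimes>\<^sub>M borel)"
      "f \<in> borel_measurable (borel \<Otimes>\<^sub>M borel)"
    unfolding T_def f_def by measurable
  have lborel_T: "distr (lborel \<Otimes>\<^sub>M lborel) (borel \<Otimes>\<^sub>M borel) T = lborel \<Otimes>\<^sub>M lborel"
  proof -
    have "T = (\<lambda>(u, v). (1 * u, e * v)) \<circ> (\<lambda>(u, v). (c * u - s * v, s * u + c * v))"
      by (auto simp: T_def)
    then have "distr (lborel \<Otimes>\<^sub>M lborel) (borel \<Otimes>\<^sub>M borel) T =
      distr (distr (lborel \<Otimes>\<^sub>M lborel) (borel \<Otimes>\<^sub>M borel) (\<lambda>(u, v). (c * u - s * v, s * u + c * v)))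
        (borel \<Otimes>\<^sub>M borel) (\<lambda>(u, v). (1 * u, e * v))"
      by (simp add: distr_distr)
    then show ?thesis
      using lborel_pair_rotation[OF cs] lborel_pair_reflect[of 1 e] e by (simp cong: distr_cong)
  qed
  have f_T: "f (T x) = f x" for x
  proof -
    obtain u v where x: "x = (u, v)" by force
    have "(c * u - s * v)\<^sup>2 + (e * (s * u + c * v))\<^sup>2 = (c\<^sup>2 + s\<^sup>2) * (u\<^sup>2 + v\<^sup>2)"
      using e by (auto simp: power2_eq_square algebra_simps)
    then show ?thesis
      using cs std_normal_density_mult_rotation[of "c * u - s * v" "e * (s * u + c * v)" u v]
      unfolding x T_def f_def by (simp add: ennreal_mult[symmetric])
  qed
  have std_pair: "std_normal \<Otimes>\<^sub>M std_normal = density (lborel \<Otimes>\<^sub>M lborel) f"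
    unfolding std_normal_def f_def
    by (rule pair_measure_density)
      (use sigma_finite_std_normal[unfolded std_normal_def] in \<open>auto intro: sigma_finite_lborel\<close>)
  have "distr (density (lborel \<Otimes>\<^sub>M lborel) (\<lambda>x. f (T x))) (borel \<Otimes>\<^sub>M borel) T
      = density (distr (lborel \<Otimes>\<^sub>M lborel) (borel \<Otimes>\<^sub>M borel) T) f"
    by (rule density_distr[symmetric]) auto
  then show ?thesis unfolding std_pair T_def[symmetric] by (simp add: f_T lborel_T)
qed

abbreviation vec_borel :: "nat \<Rightarrow> (nat \<Rightarrow> real) measure" where
  "vec_borel N \<equiv> PiM {..N} (\<lambda>_. borel)"

definition std_gauss_vec :: "nat \<Rightarrow> (nat \<Rightarrow> real) measure" where
  "std_gauss_vec N = PiM {..N} (\<lambda>_. std_normal)"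

interpretation std_normal_product: product_sigma_finite "\<lambda>_ :: nat. std_normal"
  by (simp add: product_sigma_finite_def sigma_finite_std_normal)

lemma sets_std_gauss_vec [measurable_cong]: "sets (std_gauss_vec N) = sets (vec_borel N)"
  unfolding std_gauss_vec_def by (rule sets_PiM_cong) auto

lemma space_std_gauss_vec: "space (std_gauss_vec N) = space (vec_borel N)"
  using sets_std_gauss_vec sets_eq_imp_space_eq by blast

lemma prob_space_std_gauss_vec: "prob_space (std_gauss_vec N)"
  unfolding std_gauss_vec_def by (rule prob_space_PiM) (simp add: prob_space_std_normal)

lemma measurable_std_gauss_vec_component:
  "i \<le> N \<Longrightarrow> (\<lambda>x. x i) \<in> borel_measurable (std_gauss_vec N)"
  by (subst measurable_cong_sets[OF sets_std_gauss_vec refl]) simp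

lemma measurable_vec_borel_component:
  "f \<in> measurable M (vec_borel N) \<Longrightarrow> i \<le> N \<Longrightarrow> (\<lambda>x. f x i) \<in> borel_measurable M"
  by (rule measurable_compose[OF _ measurable_component_singleton]) auto

lemma sets_Collect_finite_All_borel:
  assumes "finite J" "\<And>j. j \<in> J \<Longrightarrow> f j \<in> borel_measurable M" "\<And>j. j \<in> J \<Longrightarrow> B j \<in> sets borel"
  shows "{x \<in> space M. \<forall>j\<in>J. f j x \<in> B j} \<in> sets M"
proof (rule sets.sets_Collect_finite_All[OF _ assms(1)])
  fix j assume "j \<in> J"
  then show "{x \<in> space M. f j x \<in> B j} \<in> sets M"
    using measurable_sets[OF assms(2,3)] by (simp add: vimage_def Int_def conj_commute)
qed

lemma emeasure_std_gauss_vec_cylinder: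
  assumes "finite L" "inj_on c L" "\<And>l. l \<in> L \<Longrightarrow> c l \<le> N" "\<And>l. l \<in> L \<Longrightarrow> D l \<in> sets borel"
  shows "emeasure (std_gauss_vec N) {x \<in> space (std_gauss_vec N). \<forall>l\<in>L. x (c l) \<in> D l}
    = (\<Prod>l\<in>L. emeasure std_normal (D l))"
proof -
  define E where "E i = (if i \<in> c ` L then D (the_inv_into L c i) else UNIV)" for i
  have E_c: "E (c l) = D l" if "l \<in> L" for l
    using that assms(2) by (simp add: E_def the_inv_into_f_f)
  have "{x \<in> space (std_gauss_vec N). \<forall>l\<in>L. x (c l) \<in> D l} = PiE {..N} E"
  proof (intro set_eqI iffI)
    fix x assume x: "x \<in> {x \<in> space (std_gauss_vec N). \<forall>l\<in>L. x (c l) \<in> D l}"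
    then have "x i \<in> E i" for i
      by (cases "i \<in> c ` L") (auto simp: E_c, simp add: E_def)
    then show "x \<in> PiE {..N} E" using x by (auto simp: space_std_gauss_vec space_PiM PiE_iff)
  next
    fix x assume "x \<in> PiE {..N} E"
    then show "x \<in> {x \<in> space (std_gauss_vec N). \<forall>l\<in>L. x (c l) \<in> D l}"
      using assms(3) E_c by (force simp: space_std_gauss_vec space_PiM PiE_iff)
  qed
  moreover have "E i \<in> sets std_normal" for i
    using assms(4) by (auto simp: E_def intro: the_inv_into_into[OF assms(2)])
  then have "emeasure (std_gauss_vec N) (PiE {..N} E) = (\<Prod>i\<le>N. emeasure std_normal (E i))"
    unfolding std_gauss_vec_def by (intro std_normal_product.emeasure_PiM) auto
  also have "\<dots> = (\<Prod>i\<in>c ` L. emeasure std_normal (E i))"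
    using assms(3) prob_space.emeasure_space_1[OF prob_space_std_normal]
    by (intro prod.mono_neutral_right) (auto simp: E_def)
  also have "\<dots> = (\<Prod>l\<in>L. emeasure std_normal (D l))"
    using assms(2) by (simp add: prod.reindex E_c)
  finally show ?thesis by simp
qed

lemma measure_std_gauss_vec_cylinder:
  assumes "finite L" "inj_on c L" "\<And>l. l \<in> L \<Longrightarrow> c l \<le> N" "\<And>l. l \<in> L \<Longrightarrow> D l \<in> sets borel"
  shows "measure (std_gauss_vec N) {x \<in> space (std_gauss_vec N). \<forall>l\<in>L. x (c l) \<in> D l}
    = (\<Prod>l\<in>L. measure std_normal (D l))"
proof -
  interpret G: prob_space "std_gauss_vec N" by (rule prob_space_std_gauss_vec)
  interpret S: prob_space std_normal by (rule prob_space_std_normal)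
  show ?thesis
    using emeasure_std_gauss_vec_cylinder[OF assms]
    by (simp add: G.emeasure_eq_measure S.emeasure_eq_measure prod_ennreal prod_nonneg)
qed

lemma distr_std_gauss_vec_component:
  assumes "i \<le> N"
  shows "distr (std_gauss_vec N) borel (\<lambda>x. x i) = std_normal"
proof (rule measure_eqI)
  fix A assume "A \<in> sets (distr (std_gauss_vec N) borel (\<lambda>x. x i))"
  then have A: "A \<in> sets borel" by simp
  have "(\<lambda>x. x i) \<in> measurable (std_gauss_vec N) borel"
    using assms by simp
  then have "emeasure (distr (std_gauss_vec N) borel (\<lambda>x. x i)) A
      = emeasure (std_gauss_vec N) {x \<in> space (std_gauss_vec N). \<forall>l\<in>{i}. x l \<in> A}"
    using A by (subst emeasure_distr) (auto intro!: arg_cong[where f="emeasure (std_gauss_vec N)"])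
  also have "\<dots> = emeasure std_normal A"
    using emeasure_std_gauss_vec_cylinder[of "{i}" "\<lambda>l. l" N "\<lambda>_. A"] assms A by simp
  finally show "emeasure (distr (std_gauss_vec N) borel (\<lambda>x. x i)) A = emeasure std_normal A" .
qed simp

lemma distr_PiM_std_normal_pair:
  fixes j k :: nat
  assumes "j \<noteq> k"
  shows "distr (PiM {j, k} (\<lambda>_. std_normal)) (borel \<Otimes>\<^sub>M borel) (\<lambda>y. (y j, y k))
      = std_normal \<Otimes>\<^sub>M std_normal"
proof (rule pair_measure_eqI[symmetric])
  show "sets (std_normal \<Otimes>\<^sub>M std_normal)
    = sets (distr (PiM {j, k} (\<lambda>_. std_normal)) (borel \<Otimes>\<^sub>M borel) (\<lambda>y. (y j, y k)))"
    unfolding sets_distr by (rule sets_pair_measure_cong) simp_all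
  show "sigma_finite_measure std_normal" by (rule sigma_finite_std_normal)
  then show "sigma_finite_measure std_normal" .
  fix A B assume A: "A \<in> sets std_normal" and B: "B \<in> sets std_normal"
  have "(\<lambda>y. (y j, y k)) -` (A \<times> B) \<inter> space (PiM {j, k} (\<lambda>_. std_normal))
      = PiE {j, k} (\<lambda>i. if i = j then A else B)"
    using assms by (auto simp: space_PiM PiE_iff)
  then have "emeasure (distr (PiM {j, k} (\<lambda>_. std_normal)) (borel \<Otimes>\<^sub>M borel) (\<lambda>y. (y j, y k))) (A \<times> B)
      = emeasure (PiM {j, k} (\<lambda>_. std_normal)) (PiE {j, k} (\<lambda>i. if i = j then A else B))"
    using A B by (subst emeasure_distr) auto
  also have "\<dots> = emeasure std_normal A * emeasure std_normal B"
    using A B assms by (subst std_normal_product.emeasure_PiM) auto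
  finally show "emeasure std_normal A * emeasure std_normal B
    = emeasure (distr (PiM {j, k} (\<lambda>_. std_normal)) (borel \<Otimes>\<^sub>M borel) (\<lambda>y. (y j, y k))) (A \<times> B)"
    by simp
qed

lemma emeasure_std_gauss_vec_pair_cylinder:
  assumes jk: "j \<le> N" "k \<le> N" "j \<noteq> k" and S: "S \<in> sets (borel \<Otimes>\<^sub>M borel)"
    and A: "\<And>i. i \<in> {..N} - {j, k} \<Longrightarrow> A i \<in> sets borel"
  shows "emeasure (std_gauss_vec N)
      {x \<in> space (std_gauss_vec N). (x j, x k) \<in> S \<and> (\<forall>i\<in>{..N} - {j, k}. x i \<in> A i)}
    = emeasure (std_normal \<Otimes>\<^sub>M std_normal) S * (\<Prod>i\<in>{..N} - {j, k}. emeasure std_normal (A i))"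
    (is "emeasure _ ?X = _")
proof -
  define K where "K = {j, k}"
  define R where "R = {..N} - K"
  have KR: "K \<inter> R = {}" "K \<union> R = {..N}" "finite K" "finite R"
    using jk by (auto simp: K_def R_def)
  let ?G = "\<lambda>I. PiM I (\<lambda>_ :: nat. std_normal)"
  define SK where "SK = (\<lambda>y. (y j, y k)) -` S \<inter> space (?G K)"
  have [measurable]: "(\<lambda>y. (y j, y k)) \<in> measurable (?G K) (borel \<Otimes>\<^sub>M borel)"
    unfolding K_def by measurable
  have SK: "SK \<in> sets (?G K)"
    unfolding SK_def using S by measurable
  have rest: "{..N} - {j, k} = R" by (simp add: R_def K_def)
  have RA: "PiE R A \<in> sets (?G R)"
    using A KR by (auto intro!: sets_PiM_I_finite simp: rest)
  have X: "?X \<in> sets (?G (K \<union> R))"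
  proof -
    have "(\<lambda>x. (x j, x k)) \<in> measurable (std_gauss_vec N) (borel \<Otimes>\<^sub>M borel)"
      using jk by (intro measurable_Pair measurable_std_gauss_vec_component)
    then have "{x \<in> space (std_gauss_vec N). (x j, x k) \<in> S} \<in> sets (std_gauss_vec N)"
      using S by (auto simp: vimage_def Int_def conj_commute dest: measurable_sets)
    moreover have "{x \<in> space (std_gauss_vec N). \<forall>i\<in>{..N} - {j, k}. x i \<in> A i} \<in> sets (std_gauss_vec N)"
      using A by (intro sets_Collect_finite_All_borel) (auto intro: measurable_std_gauss_vec_component)
    ultimately have "?X \<in> sets (std_gauss_vec N)" by (rule sets.sets_Collect_conj[rotated])
    then show ?thesis by (simp add: KR(2) std_gauss_vec_def)
  qed
  have "merge K R -` ?X \<inter> space (?G K \<Otimes>\<^sub>M ?G R) = SK \<times> PiE R A"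
  proof (intro set_eqI, clarify)
    fix y z :: "nat \<Rightarrow> real"
    have "merge K R (y, z) j = y j" "merge K R (y, z) k = y k"
      by (simp_all add: merge_def K_def)
    moreover have "merge K R (y, z) i = z i" if "i \<in> R" for i
      using that KR(1) by (auto simp: merge_def)
    moreover have "merge K R (y, z) \<in> space (std_gauss_vec N)"
      by (auto simp: space_std_gauss_vec space_PiM merge_def extensional_def KR(2)[symmetric]
          split: if_splits)
    ultimately show "(y, z) \<in> merge K R -` ?X \<inter> space (?G K \<Otimes>\<^sub>M ?G R) \<longleftrightarrow> (y, z) \<in> SK \<times> PiE R A"
      unfolding rest by (auto simp: SK_def space_pair_measure space_PiM PiE_iff)
  qed
  then have "emeasure (std_gauss_vec N) ?X = emeasure (?G K \<Otimes>\<^sub>M ?G R) (SK \<times> PiE R A)"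
    using X unfolding std_gauss_vec_def KR(2)[symmetric]
    by (subst std_normal_product.distr_merge[symmetric, OF KR(1,3,4)])
      (simp add: emeasure_distr measurable_merge)
  also have "\<dots> = emeasure (?G K) SK * emeasure (?G R) (PiE R A)"
    by (rule sigma_finite_measure.emeasure_pair_measure_Times[OF
        std_normal_product.sigma_finite[OF KR(4)] SK RA])
  also have "emeasure (?G K) SK = emeasure (std_normal \<Otimes>\<^sub>M std_normal) S"
  proof -
    have "emeasure (?G K) SK = emeasure (distr (?G K) (borel \<Otimes>\<^sub>M borel) (\<lambda>y. (y j, y k))) S"
      unfolding SK_def using S by (subst emeasure_distr) auto
    then show ?thesis
      using distr_PiM_std_normal_pair[OF jk(3)] unfolding K_def by simp
  qed
  also have "emeasure (?G R) (PiE R A) = (\<Prod>i\<in>{..N} - {j, k}. emeasure std_normal (A i))"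
    using A KR by (subst std_normal_product.emeasure_PiM) (auto simp: rest)
  finally show ?thesis .
qed

lemma sum_remove_two:
  "finite I \<Longrightarrow> j \<in> I \<Longrightarrow> k \<in> I \<Longrightarrow> j \<noteq> k \<Longrightarrow> sum f I = f j + f k + sum f (I - {j, k})"
  by (simp add: sum.remove[of I j] sum.remove[of "I - {j}" k] Diff_insert2[symmetric] add.assoc)

lemma prod_remove_two:
  "finite I \<Longrightarrow> j \<in> I \<Longrightarrow> k \<in> I \<Longrightarrow> j \<noteq> k \<Longrightarrow> prod f I = f j * f k * prod f (I - {j, k})"
  by (simp add: prod.remove[of I j] prod.remove[of "I - {j}" k] Diff_insert2[symmetric] mult.assoc)

definition givens :: "nat \<Rightarrow> nat \<Rightarrow> nat \<Rightarrow> real \<Rightarrow> real \<Rightarrow> real \<Rightarrow> (nat \<Rightarrow> real) \<Rightarrow> nat \<Rightarrow> real" where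
  "givens N j k c s e x =
    (\<lambda>i\<in>{..N}. if i = j then c * x j - s * x k else if i = k then e * (s * x j + c * x k) else x i)"

lemma givens_extensional: "givens N j k c s e x \<in> extensional {..N}"
  by (simp add: givens_def)

lemma givens_cong:
  "(\<And>i. i \<le> N \<Longrightarrow> x i = x' i) \<Longrightarrow> j \<le> N \<Longrightarrow> k \<le> N \<Longrightarrow> givens N j k c s e x = givens N j k c s e x'"
  by (auto simp: givens_def)

lemma givens_add:
  "j \<le> N \<Longrightarrow> k \<le> N \<Longrightarrow> i \<le> N \<Longrightarrow>
    givens N j k c s e (\<lambda>i. x i + z i) i = givens N j k c s e x i + givens N j k c s e z i"
  by (auto simp: givens_def algebra_simps)

lemma givens_scale:
  "j \<le> N \<Longrightarrow> k \<le> N \<Longrightarrow> i \<le> N \<Longrightarrow> givens N j k c s e (\<lambda>i. a * x i) i = a * givens N j k c s e x i"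
  by (auto simp: givens_def algebra_simps)

lemma givens_other: "i \<le> N \<Longrightarrow> i \<noteq> j \<Longrightarrow> i \<noteq> k \<Longrightarrow> givens N j k c s e x i = x i"
  by (simp add: givens_def)

lemma givens_fst: "j \<le> N \<Longrightarrow> givens N j k c s e x j = c * x j - s * x k"
  by (simp add: givens_def)

lemma givens_snd: "k \<le> N \<Longrightarrow> j \<noteq> k \<Longrightarrow> givens N j k c s e x k = e * (s * x j + c * x k)"
  by (simp add: givens_def)

lemma sum_sq_givens:
  assumes "j \<le> N" "k \<le> N" "j \<noteq> k" "c\<^sup>2 + s\<^sup>2 = 1" "e\<^sup>2 = 1"
  shows "(\<Sum>i\<le>N. (givens N j k c s e x i)\<^sup>2) = (\<Sum>i\<le>N. (x i)\<^sup>2)"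
proof -
  have "(e * (s * x j + c * x k))\<^sup>2 = (s * x j + c * x k)\<^sup>2"
    using assms(5) by (simp add: power_mult_distrib)
  moreover have "(c * x j - s * x k)\<^sup>2 + (s * x j + c * x k)\<^sup>2 = (c\<^sup>2 + s\<^sup>2) * ((x j)\<^sup>2 + (x k)\<^sup>2)"
    by (simp add: power2_eq_square algebra_simps)
  moreover have "(\<Sum>i\<in>{..N} - {j, k}. (givens N j k c s e x i)\<^sup>2) = (\<Sum>i\<in>{..N} - {j, k}. (x i)\<^sup>2)"
    by (rule sum.cong) (auto simp: givens_other)
  ultimately show ?thesis
    using assms sum_remove_two[of "{..N}" j k "\<lambda>i. (givens N j k c s e x i)\<^sup>2"]
      sum_remove_two[of "{..N}" j k "\<lambda>i. (x i)\<^sup>2"]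
    by (simp add: givens_fst givens_snd)
qed

lemma givens_inverse:
  assumes "j \<le> N" "k \<le> N" "j \<noteq> k" "c\<^sup>2 + s\<^sup>2 = 1" "e\<^sup>2 = 1"
  shows "givens N j k c (- s * e) e (givens N j k c s e x) = restrict x {..N}"
proof
  fix i
  have ee: "e * e = 1" and cs: "c * c + s * s = 1"
    using assms(4,5) by (simp_all add: power2_eq_square)
  have "c * (c * x j - s * x k) + s * e * (e * (s * x j + c * x k))
      = (c * c + s * s * (e * e)) * x j + c * s * (e * e - 1) * x k"
    "e * (- (s * e * (c * x j - s * x k)) + c * (e * (s * x j + c * x k))) = (e * e)
        * (c * c + s * s) * x k"
    by (simp_all add: algebra_simps)
  then show "givens N j k c (- s * e) e (givens N j k c s e x) i = restrict x {..N} i"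
    using assms(1-3) by (auto simp: givens_def ee cs)
qed

lemma measurable_givens:
  "j \<le> N \<Longrightarrow> k \<le> N \<Longrightarrow> givens N j k c s e \<in> measurable (vec_borel N) (vec_borel N)"
  unfolding givens_def by (rule measurable_restrict) auto

lemma vimage_givens_PiE:
  assumes "j \<le> N" "k \<le> N" "j \<noteq> k"
  shows "givens N j k c s e -` PiE {..N} A \<inter> space (std_gauss_vec N) = {x \<in> space (std_gauss_vec N).
    (x j, x k) \<in> (\<lambda>(u, v). (c * u - s * v, e * (s * u + c * v))) -` (A j \<times> A k)
        \<and> (\<forall>i\<in>{..N} - {j, k}. x i \<in> A i)}"
proof -
  have "(\<forall>i\<in>{..N}. givens N j k c s e x i \<in> A i) \<longleftrightarrow> givens N j k c s e x j \<in> A j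
      \<and> givens N j k c s e x k \<in> A k \<and> (\<forall>i\<in>{..N} - {j, k}. givens N j k c s e x i \<in> A i)" for x
    using assms by auto
  moreover have "(\<forall>i\<in>{..N} - {j, k}. givens N j k c s e x i \<in> A i)
      \<longleftrightarrow> (\<forall>i\<in>{..N} - {j, k}. x i \<in> A i)" for x
    by (auto simp: givens_other)
  ultimately show ?thesis
    using assms by (auto simp: PiE_iff givens_extensional givens_fst givens_snd)
qed

lemma distr_std_gauss_vec_givens:
  assumes jk: "j \<le> N" "k \<le> N" "j \<noteq> k" and cs: "c\<^sup>2 + s\<^sup>2 = 1" and e: "e \<in> {-1, 1}"
  shows "distr (std_gauss_vec N) (vec_borel N) (givens N j k c s e) = std_gauss_vec N"
  unfolding std_gauss_vec_def
proof (rule std_normal_product.PiM_eqI)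
  show "sets (distr (PiM {..N} (\<lambda>_. std_normal)) (vec_borel N) (givens N j k c s e))
    = sets (PiM {..N} (\<lambda>_. std_normal))"
    using sets_std_gauss_vec[of N] unfolding std_gauss_vec_def by simp
  fix A assume A: "\<And>i. i \<in> {..N} \<Longrightarrow> A i \<in> sets std_normal"
  define rot where "rot = (\<lambda>(u :: real, v :: real). (c * u - s * v, e * (s * u + c * v)))"
  have rot: "rot \<in> measurable (borel \<Otimes>\<^sub>M borel) (borel \<Otimes>\<^sub>M borel)"
    unfolding rot_def by measurable
  have Ajk: "A j \<in> sets borel" "A k \<in> sets borel" using A jk by auto
  have rot_sets: "rot -` (A j \<times> A k) \<in> sets (borel \<Otimes>\<^sub>M borel)"
    using measurable_sets[OF rot pair_measureI[OF Ajk]] by (simp add: space_pair_measure)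
  have "emeasure (distr (std_gauss_vec N) (vec_borel N) (givens N j k c s e)) (PiE {..N} A)
      = emeasure (std_gauss_vec N) (givens N j k c s e -` PiE {..N} A \<inter> space (std_gauss_vec N))"
    using A jk by (intro emeasure_distr)
      (auto intro!: sets_PiM_I_finite measurable_givens
          simp: measurable_cong_sets[OF sets_std_gauss_vec refl])
  also have "\<dots> = emeasure (std_normal \<Otimes>\<^sub>M std_normal) (rot -` (A j \<times> A k))
      * (\<Prod>i\<in>{..N} - {j, k}. emeasure std_normal (A i))"
    unfolding vimage_givens_PiE[OF jk] rot_def[symmetric]
    by (rule emeasure_std_gauss_vec_pair_cylinder[OF jk rot_sets]) (use A in auto)
  also have "emeasure (std_normal \<Otimes>\<^sub>M std_normal) (rot -` (A j \<times> A k))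
    = emeasure (distr (std_normal \<Otimes>\<^sub>M std_normal) (borel \<Otimes>\<^sub>M borel) rot) (A j \<times> A k)"
    using Ajk rot by (subst emeasure_distr) (auto simp: space_pair_measure)
  also have "\<dots> = emeasure std_normal (A j) * emeasure std_normal (A k)"
    using std_normal_pair_rotation[OF cs e] Ajk unfolding rot_def
    by (simp add: sigma_finite_measure.emeasure_pair_measure_Times[OF sigma_finite_std_normal])
  finally show "emeasure (distr (PiM {..N} (\<lambda>_. std_normal)) (vec_borel N) (givens N j k c s e)) (PiE {..N} A)
    = (\<Prod>i\<le>N. emeasure std_normal (A i))"
    using jk prod_remove_two[of "{..N}" j k "\<lambda>i. emeasure std_normal (A i)"]
    unfolding std_gauss_vec_def by (simp add: mult.assoc)
qed simp

definition preserves_std_gauss_vec :: "nat \<Rightarrow> ((nat \<Rightarrow> real) \<Rightarrow> nat \<Rightarrow> real) \<Rightarrow> bool" where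
  "preserves_std_gauss_vec N f \<longleftrightarrow>
    f \<in> measurable (vec_borel N) (vec_borel N) \<and> distr (std_gauss_vec N) (vec_borel N) f
        = std_gauss_vec N"

lemma preserves_std_gauss_vec_comp:
  assumes "preserves_std_gauss_vec N f" "preserves_std_gauss_vec N g"
  shows "preserves_std_gauss_vec N (g \<circ> f)"
proof -
  have [measurable]: "f \<in> measurable (vec_borel N) (vec_borel N)"
      "g \<in> measurable (vec_borel N) (vec_borel N)"
    using assms unfolding preserves_std_gauss_vec_def by auto
  have "distr (std_gauss_vec N) (vec_borel N) (g \<circ> f)
      = distr (distr (std_gauss_vec N) (vec_borel N) f) (vec_borel N) g"
    by (subst distr_distr) (auto simp: measurable_cong_sets[OF sets_std_gauss_vec refl])
  then show ?thesis
    using assms unfolding preserves_std_gauss_vec_def by simp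
qed

lemma preserves_std_gauss_vec_givens:
  "j \<le> N \<Longrightarrow> k \<le> N \<Longrightarrow> j \<noteq> k \<Longrightarrow> c\<^sup>2 + s\<^sup>2 = 1 \<Longrightarrow> e \<in> {-1, 1} \<Longrightarrow>
    preserves_std_gauss_vec N (givens N j k c s e)"
  unfolding preserves_std_gauss_vec_def by (simp add: measurable_givens distr_std_gauss_vec_givens)

section \<open>Chains of Givens rotations\<close>

definition prefix_norm :: "(nat \<Rightarrow> real) \<Rightarrow> nat \<Rightarrow> real" where
  "prefix_norm y k = sqrt (\<Sum>i\<le>k. (y i)\<^sup>2)"

definition chain_cos :: "(nat \<Rightarrow> real) \<Rightarrow> nat \<Rightarrow> real" where
  "chain_cos y k = (if prefix_norm y (Suc k) = 0 then 0 else y (Suc k) / prefix_norm y (Suc k))"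

definition chain_sin :: "(nat \<Rightarrow> real) \<Rightarrow> nat \<Rightarrow> real" where
  "chain_sin y k = (if prefix_norm y (Suc k) = 0 then 1 else prefix_norm y k / prefix_norm y (Suc k))"

definition sgn1 :: "real \<Rightarrow> real" where
  "sgn1 v = (if v < 0 then -1 else 1)"

lemma sgn1_sq: "(sgn1 v)\<^sup>2 = 1" by (simp add: sgn1_def)
lemma sgn1_in: "sgn1 v \<in> {-1,1}" by (simp add: sgn1_def)

lemma prefix_norm_nonneg: "prefix_norm y k \<ge> 0" by (simp add: prefix_norm_def sum_nonneg)

lemma prefix_norm_sq: "(prefix_norm y k)\<^sup>2 = (\<Sum>i\<le>k. (y i)\<^sup>2)"
  by (simp add: prefix_norm_def sum_nonneg)

lemma prefix_norm_Suc_sq: "(prefix_norm y (Suc k))\<^sup>2 = (prefix_norm y k)\<^sup>2 + (y (Suc k))\<^sup>2"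
  by (simp add: prefix_norm_sq)

lemma prefix_norm_eq_0: "prefix_norm y k = 0 \<Longrightarrow> i \<le> k \<Longrightarrow> y i = 0"
proof -
  assume "prefix_norm y k = 0" "i \<le> k"
  then have "(\<Sum>i\<le>k. (y i)\<^sup>2) = 0" by (metis prefix_norm_sq zero_power2)
  then have "\<forall>i\<in>{..k}. (y i)\<^sup>2 = 0" by (subst (asm) sum_nonneg_eq_0_iff) auto
  then show "y i = 0" using \<open>i \<le> k\<close> by auto
qed

lemma prefix_norm_le_Suc: "prefix_norm y k \<le> prefix_norm y (Suc k)"
  unfolding prefix_norm_def by (rule real_sqrt_le_mono) (simp add: sum_nonneg)

lemma chain_cos_sin: "(chain_cos y k)\<^sup>2 + (chain_sin y k)\<^sup>2 = 1"
proof (cases "prefix_norm y (Suc k) = 0")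
  case False
  have "(y (Suc k))\<^sup>2 + (prefix_norm y k)\<^sup>2 = (prefix_norm y (Suc k))\<^sup>2"
    by (simp add: prefix_norm_Suc_sq)
  then show ?thesis using False by (simp add: chain_cos_def chain_sin_def power_divide
      add_divide_distrib[symmetric])
qed (simp add: chain_cos_def chain_sin_def)

(* The first step of a chain reflects coordinate 0 by the sign of y 0: a Givens map with angle
   zero whose second coordinate is multiplied by the sign. *)
fun givens_chain :: "nat \<Rightarrow> (nat \<Rightarrow> real) \<Rightarrow> nat \<Rightarrow> (nat \<Rightarrow> real) \<Rightarrow> (nat \<Rightarrow> real)" where
  "givens_chain N y 0 x = givens N N 0 1 0 (sgn1 (y 0)) x"
| "givens_chain N y (Suc k) x = givens N k (Suc k) (chain_cos y k) (chain_sin y k) 1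
    (givens_chain N y k x)"

fun givens_chain_inv :: "nat \<Rightarrow> (nat \<Rightarrow> real) \<Rightarrow> nat \<Rightarrow> (nat \<Rightarrow> real) \<Rightarrow> (nat \<Rightarrow> real)" where
  "givens_chain_inv N y 0 x = givens N N 0 1 0 (sgn1 (y 0)) x"
| "givens_chain_inv N y (Suc k) x = givens_chain_inv N y k
    (givens N k (Suc k) (chain_cos y k) (- chain_sin y k) 1 x)"

lemma givens_chain_extensional: "givens_chain N y k x \<in> extensional {..N}"
  by (cases k) (simp_all add: givens_extensional)

lemma givens_chain_cong: "k \<le> N \<Longrightarrow> (\<And>i. i \<le> N \<Longrightarrow> x i = x' i) \<Longrightarrow> givens_chain N y k x
    = givens_chain N y k x'"
proof (induction k)
  case 0 then show ?case by (simp, intro givens_cong) auto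
next
  case (Suc k) then show ?case by simp
qed

lemma givens_chain_inv_cong: "k \<le> N \<Longrightarrow> (\<And>i. i \<le> N \<Longrightarrow> x i = x' i) \<Longrightarrow> givens_chain_inv N y k x
    = givens_chain_inv N y k x'"
proof (induction k arbitrary: x x')
  case 0 then show ?case by (simp, intro givens_cong) auto
next
  case (Suc k)
  have "givens N k (Suc k) (chain_cos y k) (- chain_sin y k) 1 x
      = givens N k (Suc k) (chain_cos y k) (- chain_sin y k) 1 x'"
    using Suc.prems by (intro givens_cong) auto
  then show ?case by simp
qed

lemma givens_chain_above: "1 \<le> N \<Longrightarrow> k < i \<Longrightarrow> i \<le> N \<Longrightarrow> givens_chain N y k x i = x i"
proof (induction k)
  case 0 then show ?case by (cases "i = N") (auto simp: givens_def)
next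
  case (Suc k) then show ?case by (simp add: givens_other)
qed

lemma givens_chain_inv_above: "1 \<le> N \<Longrightarrow> k < i \<Longrightarrow> i \<le> N \<Longrightarrow> givens_chain_inv N y k x i = x i"
proof (induction k arbitrary: x)
  case 0 then show ?case by (cases "i = N") (auto simp: givens_def)
next
  case (Suc k) then show ?case by (simp add: givens_other)
qed

lemma givens_chain_add: "k \<le> N \<Longrightarrow> i \<le> N \<Longrightarrow> givens_chain N y k (\<lambda>i. x i + z i) i
    = givens_chain N y k x i + givens_chain N y k z i"
proof (induction k arbitrary: i)
  case 0 then show ?case by (simp add: givens_add)
next
  case (Suc k)
  have "givens_chain N y (Suc k) (\<lambda>i. x i + z i)
      = givens N k (Suc k) (chain_cos y k) (chain_sin y k) 1
          (\<lambda>i. givens_chain N y k x i + givens_chain N y k z i)"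
    using Suc by (simp, intro givens_cong) auto
  then show ?case using Suc.prems by (simp add: givens_add)
qed

lemma givens_chain_inv_add: "k \<le> N \<Longrightarrow> i \<le> N \<Longrightarrow> givens_chain_inv N y k (\<lambda>i. x i + z i) i
    = givens_chain_inv N y k x i + givens_chain_inv N y k z i"
proof (induction k arbitrary: i x z)
  case 0 then show ?case by (simp add: givens_add)
next
  case (Suc k)
  let ?o = "givens N k (Suc k) (chain_cos y k) (- chain_sin y k) 1"
  have "givens_chain_inv N y (Suc k) (\<lambda>i. x i + z i) = givens_chain_inv N y k (\<lambda>i. ?o x i + ?o z i)"
    using Suc.prems by (simp, intro givens_chain_inv_cong) (auto simp: givens_add)
  then show ?case using Suc by simp
qed

lemma givens_chain_inv_scale: "k \<le> N \<Longrightarrow> i \<le> N \<Longrightarrow> givens_chain_inv N y k (\<lambda>i. c * x i) i = c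
    * givens_chain_inv N y k x i"
proof (induction k arbitrary: i x)
  case 0 then show ?case by (simp add: givens_scale)
next
  case (Suc k)
  let ?o = "givens N k (Suc k) (chain_cos y k) (- chain_sin y k) 1"
  have "givens_chain_inv N y (Suc k) (\<lambda>i. c * x i) = givens_chain_inv N y k (\<lambda>i. c * ?o x i)"
    using Suc.prems by (simp, intro givens_chain_inv_cong) (auto simp: givens_scale)
  then show ?case using Suc by simp
qed

lemma sum_sq_givens_chain: "1 \<le> N \<Longrightarrow> k \<le> N \<Longrightarrow> (\<Sum>i\<le>N. (givens_chain N y k x i)\<^sup>2) = (\<Sum>i\<le>N. (x i)\<^sup>2)"
proof (induction k)
  case 0 then show ?case by (simp add: sum_sq_givens sgn1_sq)
next
  case (Suc k) then show ?case by (simp add: sum_sq_givens chain_cos_sin)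
qed

lemma sum_sq_givens_chain_inv: "1 \<le> N \<Longrightarrow> k \<le> N \<Longrightarrow> (\<Sum>i\<le>N. (givens_chain_inv N y k x i)\<^sup>2)
    = (\<Sum>i\<le>N. (x i)\<^sup>2)"
proof (induction k arbitrary: x)
  case 0 then show ?case by (simp add: sum_sq_givens sgn1_sq)
next
  case (Suc k)
  have "(chain_cos y k)\<^sup>2 + (- chain_sin y k)\<^sup>2 = 1" using chain_cos_sin by simp
  then show ?case using Suc by (simp add: sum_sq_givens)
qed

lemma givens_chain_inv_chain: "1 \<le> N \<Longrightarrow> k \<le> N \<Longrightarrow> givens_chain_inv N y k (givens_chain N y k x)
    = restrict x {..N}"
proof (induction k)
  case 0
  have "givens_chain_inv N y 0 (givens_chain N y 0 x)
      = givens N N 0 1 (- 0 * sgn1 (y 0)) (sgn1 (y 0)) (givens N N 0 1 0 (sgn1 (y 0)) x)"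
    by simp
  also have "\<dots> = restrict x {..N}" using 0 by (intro givens_inverse) (auto simp: sgn1_sq)
  finally show ?case .
next
  case (Suc k)
  have "givens N k (Suc k) (chain_cos y k) (- chain_sin y k) 1 (givens_chain N y (Suc k) x)
      = givens N k (Suc k) (chain_cos y k) (- chain_sin y k * 1) 1
          (givens N k (Suc k) (chain_cos y k) (chain_sin y k) 1 (givens_chain N y k x))"
    by simp
  also have "\<dots> = restrict (givens_chain N y k x) {..N}"
    using Suc.prems by (intro givens_inverse) (auto simp: chain_cos_sin)
  also have "\<dots> = givens_chain N y k x"
    using givens_chain_extensional[of N y k x] by (simp add: extensional_restrict)
  finally show ?case using Suc by simp
qed

lemma givens_chain_top: "1 \<le> N \<Longrightarrow> k \<le> N \<Longrightarrow> prefix_norm y k \<noteq> 0 \<Longrightarrow> givens_chain N y k x k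
    = (\<Sum>i\<le>k. x i * y i) / prefix_norm y k"
proof (induction k)
  case 0
  have "prefix_norm y 0 = \<bar>y 0\<bar>" by (simp add: prefix_norm_def)
  with 0 show ?case by (auto simp: givens_def sgn1_def abs_if)
next
  case (Suc k)
  have xu: "givens_chain N y k x (Suc k) = x (Suc k)" using Suc.prems by (intro givens_chain_above) auto
  have val: "givens_chain N y (Suc k) x (Suc k) = chain_sin y k * givens_chain N y k x k
      + chain_cos y k * x (Suc k)"
    using Suc.prems by (simp add: givens_snd xu)
  show ?case
  proof (cases "prefix_norm y k = 0")
    case True
    then have z: "y i = 0" if "i \<le> k" for i using prefix_norm_eq_0 that by blast
    have "(\<Sum>i\<le>Suc k. x i * y i) = x (Suc k) * y (Suc k)" using z by simp
    then show ?thesis using val True Suc.prems by (simp add: chain_sin_def chain_cos_def)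
  next
    case False
    have "givens_chain N y k x k = (\<Sum>i\<le>k. x i * y i) / prefix_norm y k" using Suc False by simp
    then show ?thesis using val False Suc.prems
      by (simp add: chain_sin_def chain_cos_def add_divide_distrib)
  qed
qed

lemma givens_chain_self: "1 \<le> N \<Longrightarrow> k \<le> N \<Longrightarrow> (\<forall>i<k. givens_chain N y k y i = 0)
    \<and> givens_chain N y k y k = prefix_norm y k"
proof (induction k)
  case 0
  have "prefix_norm y 0 = \<bar>y 0\<bar>" by (simp add: prefix_norm_def)
  with 0 show ?case by (auto simp: givens_def sgn1_def abs_if)
next
  case (Suc k)
  have xu: "givens_chain N y k y (Suc k) = y (Suc k)" using Suc.prems by (intro givens_chain_above) auto
  have IH: "\<forall>i<k. givens_chain N y k y i = 0" "givens_chain N y k y k = prefix_norm y k" using Suc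
    by auto
  have v1: "givens_chain N y (Suc k) y (Suc k) = chain_sin y k * prefix_norm y k + chain_cos y k
      * y (Suc k)"
    using Suc.prems by (simp add: givens_snd xu IH)
  have v0: "givens_chain N y (Suc k) y k = chain_cos y k * prefix_norm y k - chain_sin y k * y (Suc k)"
    using Suc.prems by (simp add: givens_fst xu IH)
  have lo: "givens_chain N y (Suc k) y i = 0" if "i < k" for i
    using Suc.prems that IH by (simp add: givens_other)
  show ?case
  proof (cases "prefix_norm y (Suc k) = 0")
    case True
    then have "y (Suc k) = 0" "prefix_norm y k = 0"
      using prefix_norm_eq_0[OF True, of "Suc k"] prefix_norm_le_Suc[of y k]
          prefix_norm_nonneg[of y k] by auto
    then show ?thesis using v0 v1 lo True by (auto simp: chain_sin_def chain_cos_def less_Suc_eq)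
  next
    case False
    have "prefix_norm y k * prefix_norm y k + y (Suc k) * y (Suc k) = prefix_norm y (Suc k)
        * prefix_norm y (Suc k)"
      using prefix_norm_Suc_sq[of y k] by (simp add: power2_eq_square)
    then have "(prefix_norm y k * prefix_norm y k + y (Suc k) * y (Suc k)) / prefix_norm y (Suc k)
        = prefix_norm y (Suc k)"
      using False by simp
    then have "givens_chain N y (Suc k) y (Suc k) = prefix_norm y (Suc k)"
      using v1 False by (simp add: chain_sin_def chain_cos_def add_divide_distrib)
    moreover have "givens_chain N y (Suc k) y k = 0"
      using v0 False by (simp add: chain_sin_def chain_cos_def algebra_simps)
    ultimately show ?thesis using lo by (auto simp: less_Suc_eq)
  qed
qed

definition ones_below :: "nat \<Rightarrow> nat \<Rightarrow> real" where
  "ones_below N = (\<lambda>i. if i < N then 1 else 0)"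

(* An orthogonal map sending the diagonal direction to the last axis and, for centred a,
   the vector a to a multiple of ones_below N (aligning_rotation_top, aligning_rotation_self). *)
definition aligning_rotation :: "nat \<Rightarrow> (nat \<Rightarrow> real) \<Rightarrow> (nat \<Rightarrow> real) \<Rightarrow> nat \<Rightarrow> real" where
  "aligning_rotation N a x = givens_chain_inv N (ones_below N) (N - 1)
    (givens_chain N (givens_chain N (\<lambda>_. 1) N a) (N - 1) (givens_chain N (\<lambda>_. 1) N x))"

lemma prefix_norm_ones: "prefix_norm (\<lambda>_. 1) k = sqrt (Suc k)"
  by (simp add: prefix_norm_def)

lemma prefix_norm_ones_below: "k < N \<Longrightarrow> prefix_norm (ones_below N) k = sqrt (Suc k)"
  by (simp add: prefix_norm_def ones_below_def)

lemma aligning_rotation_cong: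
  "(\<And>i. i \<le> N \<Longrightarrow> a i = a' i) \<Longrightarrow> aligning_rotation N a x = aligning_rotation N a' x"
  unfolding aligning_rotation_def by (subst givens_chain_cong[of N N a a']) auto

lemma aligning_rotation_top:
  assumes N: "1 \<le> N"
  shows "aligning_rotation N a x N = (\<Sum>i\<le>N. x i) / sqrt (Suc N)"
proof -
  have "aligning_rotation N a x N = givens_chain N (givens_chain N (\<lambda>_. 1) N a) (N - 1)
      (givens_chain N (\<lambda>_. 1) N x) N"
    unfolding aligning_rotation_def using N by (intro givens_chain_inv_above) auto
  also have "\<dots> = givens_chain N (\<lambda>_. 1) N x N"
    using N by (intro givens_chain_above) auto
  also have "\<dots> = (\<Sum>i\<le>N. x i * (\<lambda>_. 1) i) / prefix_norm (\<lambda>_. 1) N"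
    using N by (intro givens_chain_top) (auto simp: prefix_norm_ones)
  finally show ?thesis by (simp add: prefix_norm_ones)
qed

lemma aligning_rotation_add:
  assumes N: "1 \<le> N" and i: "i \<le> N"
  shows "aligning_rotation N a (\<lambda>i. x i + z i) i = aligning_rotation N a x i
      + aligning_rotation N a z i"
proof -
  let ?b = "givens_chain N (\<lambda>_. 1) N a"
  have "givens_chain N ?b (N - 1) (givens_chain N (\<lambda>_. 1) N (\<lambda>i. x i + z i))
      = givens_chain N ?b (N - 1) (\<lambda>i. givens_chain N (\<lambda>_. 1) N x i + givens_chain N (\<lambda>_. 1) N z i)"
    by (rule givens_chain_cong) (auto simp: givens_chain_add)
  moreover have "givens_chain_inv N (ones_below N) (N - 1)
      (givens_chain N ?b (N - 1) (\<lambda>i. givens_chain N (\<lambda>_. 1) N x i + givens_chain N (\<lambda>_. 1) N z i))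
     = givens_chain_inv N (ones_below N) (N - 1)
         (\<lambda>i. givens_chain N ?b (N - 1) (givens_chain N (\<lambda>_. 1) N x) i
             + givens_chain N ?b (N - 1) (givens_chain N (\<lambda>_. 1) N z) i)"
    by (rule givens_chain_inv_cong) (auto simp: givens_chain_add)
  ultimately show ?thesis unfolding aligning_rotation_def using i by (simp add: givens_chain_inv_add)
qed

lemma sum_sq_aligning_rotation:
  assumes N: "1 \<le> N"
  shows "(\<Sum>i\<le>N. (aligning_rotation N a x i)\<^sup>2) = (\<Sum>i\<le>N. (x i)\<^sup>2)"
  unfolding aligning_rotation_def using N by (simp add: sum_sq_givens_chain_inv sum_sq_givens_chain)

lemma givens_chain_self_eq:
  assumes N: "1 \<le> N" and k: "k \<le> N" and above: "\<And>i. k < i \<Longrightarrow> i \<le> N \<Longrightarrow> y i = 0"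
  shows "givens_chain N y k y = (\<lambda>j\<in>{..N}. if j = k then prefix_norm y k else 0)"
proof
  fix j
  show "givens_chain N y k y j = (\<lambda>j\<in>{..N}. if j = k then prefix_norm y k else 0) j"
  proof (cases "j \<le> N")
    case True
    then consider "j < k" | "j = k" | "k < j" by linarith
    then show ?thesis
      using givens_chain_self[OF N k, of y] givens_chain_above[OF N _ True, of k y y] above[of j] True
      by cases auto
  qed (use givens_chain_extensional[of N y k y] in \<open>auto simp: extensional_def\<close>)
qed

lemma aligning_rotation_self:
  assumes N: "1 \<le> N" and a: "(\<Sum>i\<le>N. a i) = 0" and i: "i < N"
  shows "aligning_rotation N a a i = sqrt (\<Sum>i\<le>N. (a i)\<^sup>2) / sqrt N"
proof -
  obtain K where K: "N = Suc K" using N by (cases N) auto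
  define b where "b = givens_chain N (\<lambda>_. 1) N a"
  define L where "L = sqrt (\<Sum>i\<le>N. (a i)\<^sup>2)"
  have bN: "b N = 0"
    using a N givens_chain_top[of N N "\<lambda>_. 1" a] by (simp add: b_def prefix_norm_ones)
  have "(\<Sum>i\<le>K. (b i)\<^sup>2) = (\<Sum>i\<le>N. (b i)\<^sup>2)"
    using bN K by simp
  also have "\<dots> = (\<Sum>i\<le>N. (a i)\<^sup>2)"
    unfolding b_def using N by (rule sum_sq_givens_chain) simp
  finally have norm_b: "prefix_norm b K = L"
    by (simp add: prefix_norm_def L_def)
  have "givens_chain N b K b = (\<lambda>j\<in>{..N}. if j = K then L else 0)"
    by (subst givens_chain_self_eq) (use N K bN norm_b in \<open>auto simp: le_Suc_eq\<close>)
  also have "\<dots> = (\<lambda>j\<in>{..N}. (L / sqrt N) * givens_chain N (ones_below N) K (ones_below N) j)"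
    using givens_chain_self_eq[OF N, of K "ones_below N"] prefix_norm_ones_below[of K N] K
    by (auto simp: ones_below_def intro!: restrict_ext)
  finally have chain: "givens_chain N b K b = \<dots>" .
  have "aligning_rotation N a a = givens_chain_inv N (ones_below N) K (givens_chain N b K b)"
    unfolding aligning_rotation_def b_def using K by simp
  also have "\<dots> = givens_chain_inv N (ones_below N) K
      (\<lambda>j. (L / sqrt N) * givens_chain N (ones_below N) K (ones_below N) j)"
    by (rule givens_chain_inv_cong) (use K chain in auto)
  finally have "aligning_rotation N a a i
      = givens_chain_inv N (ones_below N) K
          (\<lambda>j. (L / sqrt N) * givens_chain N (ones_below N) K (ones_below N) j) i"
    by simp
  also have "\<dots> = (L / sqrt N) * givens_chain_inv N (ones_below N) K
      (givens_chain N (ones_below N) K (ones_below N)) i"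
    by (rule givens_chain_inv_scale) (use i K in auto)
  also have "\<dots> = (L / sqrt N) * ones_below N i"
    using i K givens_chain_inv_chain[OF N, of K "ones_below N"] by simp
  finally show ?thesis using i by (simp add: ones_below_def L_def)
qed

lemma sum_sq_centred_shift:
  fixes g a :: "nat \<Rightarrow> real"
  assumes a0: "(\<Sum>i\<le>N. a i) = 0"
  shows "(\<Sum>i\<le>N. (g i - (\<Sum>j\<le>N. g j) / real (Suc N) + a i)\<^sup>2)
       = (\<Sum>i\<le>N. (g i + a i)\<^sup>2) - (\<Sum>i\<le>N. g i + a i)\<^sup>2 / real (Suc N)"
proof -
  define S where "S = (\<Sum>j\<le>N. g j)"
  define m where "m = S / real (Suc N)"
  have Sga: "(\<Sum>i\<le>N. g i + a i) = S" using a0 by (simp add: S_def sum.distrib)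
  have "(\<Sum>i\<le>N. (g i - m + a i)\<^sup>2) = (\<Sum>i\<le>N. (g i + a i)\<^sup>2 - 2 * m * (g i + a i) + m\<^sup>2)"
    by (rule sum.cong) (auto simp: power2_eq_square algebra_simps)
  also have "\<dots> = (\<Sum>i\<le>N. (g i + a i)\<^sup>2) - 2 * m * (\<Sum>i\<le>N. g i + a i) + real (Suc N) * m\<^sup>2"
    by (simp add: sum.distrib sum_subtractf sum_distrib_left[symmetric])
  also have "\<dots> = (\<Sum>i\<le>N. (g i + a i)\<^sup>2) - S\<^sup>2 / real (Suc N)"
  proof -
    have gen: "X - 2 * (S / r) * S + r * (S / r)\<^sup>2 = X - S\<^sup>2 / r" if "r > 0" for X r :: real
      using that by (simp add: field_simps power2_eq_square)
    show ?thesis unfolding Sga m_def by (rule gen) simp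
  qed
  finally show ?thesis by (simp add: m_def S_def Sga[unfolded S_def])
qed

lemma sum_sq_aligning_rotation_shift:
  assumes N: "1 \<le> N" and a0: "(\<Sum>i\<le>N. a i) = 0"
  shows "(\<Sum>i<N. (aligning_rotation N a g i + sqrt (\<Sum>i\<le>N. (a i)\<^sup>2) / sqrt N)\<^sup>2)
       = (\<Sum>i\<le>N. (g i - (\<Sum>j\<le>N. g j) / real (Suc N) + a i)\<^sup>2)"
proof -
  let ?z = "aligning_rotation N a (\<lambda>i. g i + a i)"
  have "(\<Sum>i<N. (aligning_rotation N a g i + sqrt (\<Sum>i\<le>N. (a i)\<^sup>2) / sqrt N)\<^sup>2) = (\<Sum>i<N. (?z i)\<^sup>2)"
    by (rule sum.cong) (use N a0 in \<open>auto simp: aligning_rotation_add aligning_rotation_self\<close>)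
  also have "\<dots> = (\<Sum>i\<le>N. (?z i)\<^sup>2) - (?z N)\<^sup>2"
    by (simp add: lessThan_Suc_atMost[symmetric])
  also have "\<dots> = (\<Sum>i\<le>N. (g i + a i)\<^sup>2) - (\<Sum>i\<le>N. g i + a i)\<^sup>2 / real (Suc N)"
    using N by (simp add: sum_sq_aligning_rotation aligning_rotation_top power_divide)
  also have "\<dots> = (\<Sum>i\<le>N. (g i - (\<Sum>j\<le>N. g j) / real (Suc N) + a i)\<^sup>2)"
    using sum_sq_centred_shift[OF a0] by simp
  finally show ?thesis .
qed


lemma measurable_givens_param:
  assumes jk: "j \<le> N" "k \<le> N"
    and [measurable]: "c \<in> borel_measurable M" "s \<in> borel_measurable M" "e \<in> borel_measurable M"
    and x: "\<And>i. i \<le> N \<Longrightarrow> (\<lambda>p. x p i) \<in> borel_measurable M"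
  shows "(\<lambda>p. givens N j k (c p) (s p) (e p) (x p)) \<in> measurable M (vec_borel N)"
proof (rule measurable_PiM_single')
  fix i assume i: "i \<in> {..N}"
  have [measurable]: "(\<lambda>p. x p j) \<in> borel_measurable M" "(\<lambda>p. x p k) \<in> borel_measurable M"
    "(\<lambda>p. x p i) \<in> borel_measurable M"
    using x jk i by auto
  have eq: "(\<lambda>p. givens N j k (c p) (s p) (e p) (x p) i) = (\<lambda>p. if i = j then c p * x p j - s p * x p k
      else if i = k then e p * (s p * x p j + c p * x p k) else x p i)"
    using i by (simp add: givens_def)
  show "(\<lambda>p. givens N j k (c p) (s p) (e p) (x p) i) \<in> borel_measurable M"
    unfolding eq by measurable
qed (use givens_extensional in \<open>auto simp: PiE_iff\<close>)

lemma measurable_prefix_norm: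
  assumes "\<And>i. (\<lambda>p. Yf p i) \<in> borel_measurable Mp"
  shows "(\<lambda>p. prefix_norm (Yf p) k) \<in> borel_measurable Mp"
proof -
  have [measurable]: "(\<lambda>p. Yf p i) \<in> borel_measurable Mp" for i using assms by auto
  show ?thesis unfolding prefix_norm_def by measurable
qed

lemma measurable_chain_cos:
  assumes "\<And>i. (\<lambda>p. Yf p i) \<in> borel_measurable Mp"
  shows "(\<lambda>p. chain_cos (Yf p) k) \<in> borel_measurable Mp"
proof -
  have [measurable]: "(\<lambda>p. Yf p i) \<in> borel_measurable Mp" for i using assms by auto
  have [measurable]: "(\<lambda>p. prefix_norm (Yf p) i) \<in> borel_measurable Mp" for i
    using measurable_prefix_norm[OF assms] by auto
  show ?thesis unfolding chain_cos_def by measurable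
qed

lemma measurable_chain_sin:
  assumes "\<And>i. (\<lambda>p. Yf p i) \<in> borel_measurable Mp"
  shows "(\<lambda>p. chain_sin (Yf p) k) \<in> borel_measurable Mp"
proof -
  have [measurable]: "(\<lambda>p. prefix_norm (Yf p) i) \<in> borel_measurable Mp" for i
    using measurable_prefix_norm[OF assms] by auto
  show ?thesis unfolding chain_sin_def by measurable
qed

lemma measurable_sgn1[measurable]: "sgn1 \<in> borel_measurable borel"
  unfolding sgn1_def by measurable

lemma measurable_givens_chain_param:
  assumes N: "1 \<le> N" and Y: "\<And>i. (\<lambda>p. Yf p i) \<in> borel_measurable Mp"
    and X: "\<And>i. i \<le> N \<Longrightarrow> (\<lambda>p. Xf p i) \<in> borel_measurable Mp"
  shows "k \<le> N \<Longrightarrow> (\<lambda>p. givens_chain N (Yf p) k (Xf p)) \<in> measurable Mp (vec_borel N)"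
proof (induction k)
  case 0
  have [measurable]: "(\<lambda>p. Yf p 0) \<in> borel_measurable Mp" using Y by auto
  show ?case by simp (rule measurable_givens_param, use N X in auto)
next
  case (Suc k)
  have [measurable]: "(\<lambda>p. chain_cos (Yf p) k) \<in> borel_measurable Mp"
      "(\<lambda>p. chain_sin (Yf p) k) \<in> borel_measurable Mp"
    using measurable_chain_cos[OF Y] measurable_chain_sin[OF Y] by auto
  have IH: "(\<lambda>p. givens_chain N (Yf p) k (Xf p)) \<in> measurable Mp (vec_borel N)" using Suc by auto
  show ?case by simp (rule measurable_givens_param, use Suc.prems
      measurable_vec_borel_component[OF IH] in auto)
qed

lemma measurable_givens_chain_inv_param:
  assumes N: "1 \<le> N" and Y: "\<And>i. (\<lambda>p. Yf p i) \<in> borel_measurable Mp"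
  shows "k \<le> N \<Longrightarrow> (\<And>i. i \<le> N \<Longrightarrow> (\<lambda>p. Xf p i) \<in> borel_measurable Mp)
      \<Longrightarrow> (\<lambda>p. givens_chain_inv N (Yf p) k (Xf p)) \<in> measurable Mp (vec_borel N)"
proof (induction k arbitrary: Xf)
  case 0
  have [measurable]: "(\<lambda>p. Yf p 0) \<in> borel_measurable Mp" using Y by auto
  show ?case by simp (rule measurable_givens_param, use N 0 in auto)
next
  case (Suc k)
  have g1: "(\<lambda>p. chain_sin (Yf p) k) \<in> borel_measurable Mp" by (rule measurable_chain_sin[OF Y])
  have [measurable]: "(\<lambda>p. chain_cos (Yf p) k) \<in> borel_measurable Mp"
      "(\<lambda>p. - chain_sin (Yf p) k) \<in> borel_measurable Mp"
    using measurable_chain_cos[OF Y] borel_measurable_uminus[OF g1] by auto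
  have o: "(\<lambda>p. givens N k (Suc k) (chain_cos (Yf p) k) (- chain_sin (Yf p) k) 1 (Xf p)) \<in>
      measurable Mp (vec_borel N)"
    by (rule measurable_givens_param) (use Suc.prems g1 in auto)
  show ?case by simp (rule Suc.IH, use Suc.prems measurable_vec_borel_component[OF o] in auto)
qed

lemma measurable_aligning_rotation_param:
  assumes N: "1 \<le> N" and A: "\<And>i. (\<lambda>p. Af p i) \<in> borel_measurable Mp"
    and X: "\<And>i. i \<le> N \<Longrightarrow> (\<lambda>p. Xf p i) \<in> borel_measurable Mp"
  shows "(\<lambda>p. aligning_rotation N (Af p) (Xf p)) \<in> measurable Mp (vec_borel N)"
proof -
  have b: "(\<lambda>p. givens_chain N (\<lambda>_. 1) N (Af p)) \<in> measurable Mp (vec_borel N)"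
    by (rule measurable_givens_chain_param) (use N A in auto)
  have bY: "(\<lambda>p. givens_chain N (\<lambda>_. 1) N (Af p) i) \<in> borel_measurable Mp" for i
  proof (cases "i \<le> N")
    case True then show ?thesis using measurable_vec_borel_component[OF b] by auto
  next
    case False
    then have "givens_chain N (\<lambda>_. 1) N (Af p) i = undefined" for p
      using givens_chain_extensional[of N "\<lambda>_. 1" N "Af p"] by (simp add: extensional_def)
    then show ?thesis by simp
  qed
  have c: "(\<lambda>p. givens_chain N (\<lambda>_. 1) N (Xf p)) \<in> measurable Mp (vec_borel N)"
    by (rule measurable_givens_chain_param) (use N X in auto)
  have d: "(\<lambda>p. givens_chain N (givens_chain N (\<lambda>_. 1) N (Af p)) (N - 1)
      (givens_chain N (\<lambda>_. 1) N (Xf p))) \<in> measurable Mp (vec_borel N)"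
    by (rule measurable_givens_chain_param) (use N bY measurable_vec_borel_component[OF c] in auto)
  show ?thesis unfolding aligning_rotation_def
    by (rule measurable_givens_chain_inv_param)
      (use N measurable_vec_borel_component[OF d] in \<open>auto simp: ones_below_def\<close>)
qed


lemma preserves_std_gauss_vec_givens_chain:
  assumes N: "1 \<le> N"
  shows "k \<le> N \<Longrightarrow> preserves_std_gauss_vec N (givens_chain N y k)"
proof (induction k)
  case 0
  have "givens_chain N y 0 = givens N N 0 1 0 (sgn1 (y 0))" by (rule ext) simp
  moreover have "preserves_std_gauss_vec N (givens N N 0 1 0 (sgn1 (y 0)))"
    using N sgn1_in by (intro preserves_std_gauss_vec_givens) auto
  ultimately show ?case by simp
next
  case (Suc k)
  have eq: "givens_chain N y (Suc k) = givens N k (Suc k) (chain_cos y k) (chain_sin y k) 1 \<circ>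
      givens_chain N y k"
    by (rule ext) simp
  have "preserves_std_gauss_vec N (givens N k (Suc k) (chain_cos y k) (chain_sin y k) 1)"
    using Suc.prems chain_cos_sin by (intro preserves_std_gauss_vec_givens) auto
  with Suc show ?case
    unfolding eq by (intro preserves_std_gauss_vec_comp) auto
qed

lemma preserves_std_gauss_vec_givens_chain_inv:
  assumes N: "1 \<le> N"
  shows "k \<le> N \<Longrightarrow> preserves_std_gauss_vec N (givens_chain_inv N y k)"
proof (induction k)
  case 0
  have "givens_chain_inv N y 0 = givens N N 0 1 0 (sgn1 (y 0))" by (rule ext) simp
  moreover have "preserves_std_gauss_vec N (givens N N 0 1 0 (sgn1 (y 0)))"
    using N sgn1_in by (intro preserves_std_gauss_vec_givens) auto
  ultimately show ?case by simp
next
  case (Suc k)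
  have eq: "givens_chain_inv N y (Suc k) = givens_chain_inv N y k \<circ> givens N k (Suc k)
      (chain_cos y k) (- chain_sin y k) 1"
    by (rule ext) simp
  have "(chain_cos y k)\<^sup>2 + (- chain_sin y k)\<^sup>2 = 1" using chain_cos_sin by simp
  then have "preserves_std_gauss_vec N (givens N k (Suc k) (chain_cos y k) (- chain_sin y k) 1)"
    using Suc.prems by (intro preserves_std_gauss_vec_givens) auto
  with Suc show ?case
    unfolding eq by (intro preserves_std_gauss_vec_comp) auto
qed

lemma preserves_std_gauss_vec_aligning_rotation:
  assumes N: "1 \<le> N"
  shows "preserves_std_gauss_vec N (aligning_rotation N a)"
proof -
  have "aligning_rotation N a = givens_chain_inv N (ones_below N) (N - 1)
      \<circ> givens_chain N (givens_chain N (\<lambda>_. 1) N a) (N - 1) \<circ> givens_chain N (\<lambda>_. 1) N"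
    by (rule ext) (simp add: aligning_rotation_def)
  then show ?thesis
    using N by (simp add: preserves_std_gauss_vec_comp preserves_std_gauss_vec_givens_chain
        preserves_std_gauss_vec_givens_chain_inv)
qed

section \<open>Independent Gaussian innovations\<close>

lemma distr_pair_snd_prob:
  assumes "prob_space P" "sigma_finite_measure Q"
  shows "distr (P \<Otimes>\<^sub>M Q) Q snd = Q"
proof (intro measure_eqI)
  fix A assume A: "A \<in> sets (distr (P \<Otimes>\<^sub>M Q) Q snd)"
  then have "emeasure (distr (P \<Otimes>\<^sub>M Q) Q snd) A = emeasure (P \<Otimes>\<^sub>M Q) (space P \<times> A)"
    by (auto simp: emeasure_distr space_pair_measure dest: sets.sets_into_space
        intro!: arg_cong2[where f=emeasure])
  also have "\<dots> = emeasure P (space P) * emeasure Q A"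
    using A by (intro sigma_finite_measure.emeasure_pair_measure_Times[OF assms(2)]) auto
  finally show "emeasure (distr (P \<Otimes>\<^sub>M Q) Q snd) A = emeasure Q A"
    using prob_space.emeasure_space_1[OF assms(1)] by simp
qed simp

lemma distr_pair_fibrewise_preserving:
  assumes P: "sigma_finite_measure P"
    and Phi: "(\<lambda>(h, x). Phi h x) \<in> measurable (\<nu> \<Otimes>\<^sub>M P) P"
    and preserving: "\<And>h. h \<in> space \<nu> \<Longrightarrow> distr P P (Phi h) = P"
  shows "distr (\<nu> \<Otimes>\<^sub>M P) (\<nu> \<Otimes>\<^sub>M P) (\<lambda>(h, x). (h, Phi h x)) = \<nu> \<Otimes>\<^sub>M P"
    (is "distr _ _ ?T = _")
proof (rule measure_eqI)
  have T: "?T \<in> measurable (\<nu> \<Otimes>\<^sub>M P) (\<nu> \<Otimes>\<^sub>M P)"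
    using Phi by (auto simp: measurable_pair_iff split_beta')
  fix A assume "A \<in> sets (distr (\<nu> \<Otimes>\<^sub>M P) (\<nu> \<Otimes>\<^sub>M P) ?T)"
  then have A: "A \<in> sets (\<nu> \<Otimes>\<^sub>M P)" by simp
  have "emeasure (distr (\<nu> \<Otimes>\<^sub>M P) (\<nu> \<Otimes>\<^sub>M P) ?T) A = emeasure (\<nu> \<Otimes>\<^sub>M P) (?T -` A \<inter> space (\<nu> \<Otimes>\<^sub>M P))"
    by (rule emeasure_distr[OF T A])
  also have "\<dots> = (\<integral>\<^sup>+h. emeasure P (Pair h -` (?T -` A \<inter> space (\<nu> \<Otimes>\<^sub>M P))) \<partial>\<nu>)"
    by (rule sigma_finite_measure.emeasure_pair_measure_alt[OF P]) (rule measurable_sets[OF T A])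
  also have "\<dots> = (\<integral>\<^sup>+h. emeasure P (Pair h -` A) \<partial>\<nu>)"
  proof (rule nn_integral_cong)
    fix h assume h: "h \<in> space \<nu>"
    have "Pair h -` (?T -` A \<inter> space (\<nu> \<Otimes>\<^sub>M P)) = Phi h -` (Pair h -` A) \<inter> space P"
      using h by (auto simp: space_pair_measure)
    moreover have "Phi h \<in> measurable P P"
      using measurable_Pair2[OF Phi h] by simp
    ultimately show "emeasure P (Pair h -` (?T -` A \<inter> space (\<nu> \<Otimes>\<^sub>M P))) = emeasure P (Pair h -` A)"
      using preserving[OF h] sets_Pair1[OF A] by (simp add: emeasure_distr[symmetric])
  qed
  also have "\<dots> = emeasure (\<nu> \<Otimes>\<^sub>M P) A"
    by (rule sigma_finite_measure.emeasure_pair_measure_alt[OF P, symmetric]) (rule A)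
  finally show "emeasure (distr (\<nu> \<Otimes>\<^sub>M P) (\<nu> \<Otimes>\<^sub>M P) ?T) A = emeasure (\<nu> \<Otimes>\<^sub>M P) A" .
qed simp

(* indep_var requires both variables to take values in the same type; independence of
   variables of different types is expressed through their joint law. *)
definition (in prob_space) indep_pair :: "'b measure \<Rightarrow> ('a \<Rightarrow> 'b) \<Rightarrow> 'c measure \<Rightarrow> ('a \<Rightarrow> 'c) \<Rightarrow> bool" where
  "indep_pair Ma A Mb B \<longleftrightarrow> A \<in> measurable M Ma \<and> B \<in> measurable M Mb \<and>
     distr M Ma A \<Otimes>\<^sub>M distr M Mb B = distr M (Ma \<Otimes>\<^sub>M Mb) (\<lambda>x. (A x, B x))"

lemma (in prob_space) indep_var_imp_indep_pair: "indep_var Ma A Mb B \<Longrightarrow> indep_pair Ma A Mb B"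
  unfolding indep_pair_def indep_var_distribution_eq by auto

lemma (in prob_space) indep_pair_compose:
  assumes indep: "indep_pair Ma A Mb B" and f: "f \<in> measurable Ma Na" and g: "g \<in> measurable Mb Nb"
  shows "indep_pair Na (\<lambda>x. f (A x)) Nb (\<lambda>x. g (B x))"
proof -
  have [measurable]: "A \<in> measurable M Ma" "B \<in> measurable M Mb" "f \<in> measurable Ma Na"
      "g \<in> measurable Mb Nb"
    and joint: "distr M Ma A \<Otimes>\<^sub>M distr M Mb B = distr M (Ma \<Otimes>\<^sub>M Mb) (\<lambda>x. (A x, B x))"
    using indep f g unfolding indep_pair_def by auto
  have "sigma_finite_measure (distr (distr M Mb B) Nb g)"
    by (subst distr_distr) (simp_all add: prob_space_imp_sigma_finite prob_space_distr)
  then have "distr (distr M Ma A) Na f \<Otimes>\<^sub>M distr (distr M Mb B) Nb g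
      = distr (distr M Ma A \<Otimes>\<^sub>M distr M Mb B) (Na \<Otimes>\<^sub>M Nb) (\<lambda>(x, y). (f x, g y))"
    by (intro pair_measure_distr) simp_all
  then show ?thesis
    unfolding indep_pair_def joint by (simp add: distr_distr comp_def split_beta')
qed

lemma (in prob_space) indep_pairD:
  assumes indep: "indep_pair Ma A Mb B" and sets: "Xa \<in> sets Ma" "Xb \<in> sets Mb"
  shows "prob ((\<lambda>x. (A x, B x)) -` (Xa \<times> Xb) \<inter> space M) = prob (A -` Xa \<inter> space M)
      * prob (B -` Xb \<inter> space M)"
proof -
  have [measurable]: "A \<in> measurable M Ma" "B \<in> measurable M Mb"
    and joint: "distr M Ma A \<Otimes>\<^sub>M distr M Mb B = distr M (Ma \<Otimes>\<^sub>M Mb) (\<lambda>x. (A x, B x))"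
    using indep unfolding indep_pair_def by auto
  interpret B: prob_space "distr M Mb B" by (rule prob_space_distr) simp
  have "emeasure (distr M Ma A \<Otimes>\<^sub>M distr M Mb B) (Xa \<times> Xb) = emeasure (distr M Ma A) Xa
      * emeasure (distr M Mb B) Xb"
    using sets by (intro B.emeasure_pair_measure_Times) auto
  then have "measure (distr M (Ma \<Otimes>\<^sub>M Mb) (\<lambda>x. (A x, B x))) (Xa \<times> Xb) = measure (distr M Ma A) Xa
      * measure (distr M Mb B) Xb"
    unfolding joint by (simp add: measure_def enn2real_mult)
  then show ?thesis
    using sets by (simp add: measure_distr)
qed

lemma (in prob_space) indep_pair_law_preserving_transform:
  assumes indep: "indep_pair MH H MF F"
    and Phi: "(\<lambda>(h, x). Phi h x) \<in> measurable (MH \<Otimes>\<^sub>M MF) MF"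
    and preserving: "\<And>h. h \<in> space MH \<Longrightarrow> distr (distr M MF F) MF (Phi h) = distr M MF F"
  shows "indep_pair MH H MF (\<lambda>\<omega>. Phi (H \<omega>) (F \<omega>))"
    and "distr M MF (\<lambda>\<omega>. Phi (H \<omega>) (F \<omega>)) = distr M MF F"
proof -
  have [measurable]: "H \<in> measurable M MH" "F \<in> measurable M MF"
    using indep unfolding indep_pair_def by auto
  define \<nu> where "\<nu> = distr M MH H"
  define P where "P = distr M MF F"
  have prob: "prob_space \<nu>" "prob_space P"
    unfolding \<nu>_def P_def by (auto intro!: prob_space_distr)
  have sets: "sets (\<nu> \<Otimes>\<^sub>M P) = sets (MH \<Otimes>\<^sub>M MF)"
    unfolding \<nu>_def P_def by (rule sets_pair_measure_cong) simp_all
  have joint: "distr M (MH \<Otimes>\<^sub>M MF) (\<lambda>\<omega>. (H \<omega>, F \<omega>)) = \<nu> \<Otimes>\<^sub>M P"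
    using indep unfolding indep_pair_def \<nu>_def P_def by simp
  have [measurable]: "(\<lambda>(h, x). (h, Phi h x)) \<in> measurable (MH \<Otimes>\<^sub>M MF) (MH \<Otimes>\<^sub>M MF)"
    using Phi by (auto simp: measurable_pair_iff split_beta')
  have PhiHF [measurable]: "(\<lambda>\<omega>. Phi (H \<omega>) (F \<omega>)) \<in> measurable M MF"
    using measurable_comp[OF measurable_Pair[of H M MH F MF] Phi] by (simp add: comp_def)
  have "distr M (MH \<Otimes>\<^sub>M MF) (\<lambda>\<omega>. (H \<omega>, Phi (H \<omega>) (F \<omega>)))
      = distr (distr M (MH \<Otimes>\<^sub>M MF) (\<lambda>\<omega>. (H \<omega>, F \<omega>))) (MH \<Otimes>\<^sub>M MF) (\<lambda>(h, x). (h, Phi h x))"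
    by (subst distr_distr) (auto simp: comp_def)
  also have "\<dots> = distr (\<nu> \<Otimes>\<^sub>M P) (\<nu> \<Otimes>\<^sub>M P) (\<lambda>(h, x). (h, Phi h x))"
    unfolding joint by (rule distr_cong) (simp_all add: sets)
  also have "\<dots> = \<nu> \<Otimes>\<^sub>M P"
  proof (rule distr_pair_fibrewise_preserving)
    show "sigma_finite_measure P" using prob(2) by (rule prob_space_imp_sigma_finite)
    show "(\<lambda>(h, x). Phi h x) \<in> measurable (\<nu> \<Otimes>\<^sub>M P) P"
      using Phi measurable_cong_sets[OF sets, of P MF] by (simp add: P_def)
    show "distr P P (Phi h) = P" if "h \<in> space \<nu>" for h
      using preserving[of h] that unfolding P_def \<nu>_def by (simp cong: distr_cong)
  qed
  finally have joint': "distr M (MH \<Otimes>\<^sub>M MF) (\<lambda>\<omega>. (H \<omega>, Phi (H \<omega>) (F \<omega>))) = \<nu> \<Otimes>\<^sub>M P" .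
  have "distr M MF (\<lambda>\<omega>. Phi (H \<omega>) (F \<omega>))
      = distr (distr M (MH \<Otimes>\<^sub>M MF) (\<lambda>\<omega>. (H \<omega>, Phi (H \<omega>) (F \<omega>)))) MF snd"
    by (subst distr_distr) (auto simp: comp_def)
  also have "\<dots> = distr (\<nu> \<Otimes>\<^sub>M P) P snd"
    unfolding joint' by (rule distr_cong) (simp_all add: P_def)
  also have "\<dots> = P"
    using prob by (intro distr_pair_snd_prob prob_space_imp_sigma_finite)
  finally show law: "distr M MF (\<lambda>\<omega>. Phi (H \<omega>) (F \<omega>)) = distr M MF F"
    unfolding P_def .
  show "indep_pair MH H MF (\<lambda>\<omega>. Phi (H \<omega>) (F \<omega>))"
    unfolding indep_pair_def using joint' law by (simp add: \<nu>_def P_def)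
qed

lemma (in prob_space) indep_vars_reindex:
  assumes indep: "indep_vars M' X (f ` I)" and inj: "inj_on f I"
  shows "indep_vars (\<lambda>i. M' (f i)) (\<lambda>i. X (f i)) I"
proof -
  have rv: "\<forall>i\<in>f ` I. random_variable (M' i) (X i)"
    and sets: "indep_sets (\<lambda>i. {X i -` A \<inter> space M |A. A \<in> sets (M' i)}) (f ` I)"
    using indep unfolding indep_vars_def2 by auto
  show ?thesis
    unfolding indep_vars_def2
  proof (intro conjI ballI)
    show "\<And>i. i \<in> I \<Longrightarrow> random_variable (M' (f i)) (X (f i))" using rv by auto
    show "indep_sets (\<lambda>i. {X (f i) -` A \<inter> space M |A. A \<in> sets (M' (f i))}) I"
      unfolding indep_sets_def
    proof (intro conjI ballI allI impI)
      fix i assume "i \<in> I"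
      then show "{X (f i) -` A \<inter> space M |A. A \<in> sets (M' (f i))} \<subseteq> events"
        using sets unfolding indep_sets_def by auto
    next
      fix J A assume J: "J \<subseteq> I" "J \<noteq> {}" "finite J"
        and A: "A \<in> Pi J (\<lambda>i. {X (f i) -` A \<inter> space M |A. A \<in> sets (M' (f i))})"
      define A' where "A' j = A (the_inv_into I f j)" for j
      have injJ: "inj_on f J" using inj J(1) by (rule inj_on_subset)
      have A'f: "A' (f i) = A i" if "i \<in> J" for i
        using J(1) that inj by (simp add: A'_def the_inv_into_f_f subset_eq)
      have "A' \<in> Pi (f ` J) (\<lambda>i. {X i -` A \<inter> space M |A. A \<in> sets (M' i)})"
        using A A'f by (auto simp: Pi_iff)
      then have "prob (\<Inter>j\<in>f ` J. A' j) = (\<Prod>j\<in>f ` J. prob (A' j))"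
        using sets J unfolding indep_sets_def by
            (metis (no_types, lifting) finite_imageI image_is_empty image_mono)
      then show "prob (\<Inter>i\<in>J. A i) = (\<Prod>i\<in>J. prob (A i))"
        using A'f by (simp add: prod.reindex[OF injJ])
    qed
  qed
qed

(* Z T is the Gaussian innovation of step T; H T is the information available before that
   step, from which every earlier innovation can be recalled. *)
locale gauss_innovations = prob_space M for M :: "'a measure" +
  fixes N :: nat and MH :: "nat \<Rightarrow> 'h measure" and H :: "nat \<Rightarrow> 'a \<Rightarrow> 'h"
    and Z :: "nat \<Rightarrow> 'a \<Rightarrow> nat \<Rightarrow> real" and recall :: "nat \<Rightarrow> nat \<Rightarrow> 'h \<Rightarrow> nat \<Rightarrow> real"
  assumes indep_past: "prob_space.indep_pair M (MH T) (H T) (vec_borel N) (Z T)"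
    and distr_innovation: "distr M (vec_borel N) (Z T) = std_gauss_vec N"
    and measurable_recall: "t < T \<Longrightarrow> recall T t \<in> measurable (MH T) (vec_borel N)"
    and innovation_recall: "t < T \<Longrightarrow> Z t \<omega> = recall T t (H T \<omega>)"
begin

lemma measurable_innovation: "Z T \<in> measurable M (vec_borel N)"
  using indep_past unfolding indep_pair_def by auto

lemma measurable_past: "H T \<in> measurable M (MH T)"
  using indep_past unfolding indep_pair_def by auto

lemma distributed_innovation:
  assumes "i \<le> N"
  shows "distributed M lborel (\<lambda>\<omega>. Z T \<omega> i) std_normal_density"
proof -
  have Zi: "(\<lambda>\<omega>. Z T \<omega> i) \<in> borel_measurable M"
    using measurable_vec_borel_component[OF measurable_innovation assms] .
  have "distr M lborel (\<lambda>\<omega>. Z T \<omega> i) = distr (distr M (vec_borel N) (Z T)) borel (\<lambda>x. x i)"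
    using measurable_innovation assms by (subst distr_distr) (auto simp: comp_def cong: distr_cong)
  also have "\<dots> = std_normal"
    using assms by (simp add: distr_innovation distr_std_gauss_vec_component)
  finally show ?thesis
    unfolding distributed_def std_normal_def using Zi by simp
qed

lemma prob_innovations_cylinder:
  assumes "finite J" "J \<subseteq> {..<T} \<times> {..N}" "\<And>j. j \<in> J \<Longrightarrow> B j \<in> sets borel"
  shows "prob {\<omega> \<in> space M. \<forall>j\<in>J. Z (fst j) \<omega> (snd j) \<in> B j} = (\<Prod>j\<in>J. measure std_normal (B j))"
  using assms
proof (induction T arbitrary: J)
  case 0
  then show ?case by (simp add: prob_space)
next
  case (Suc T)
  define J1 where "J1 = {j \<in> J. fst j < T}"
  define J2 where "J2 = {j \<in> J. fst j = T}"
  have J: "J = J1 \<union> J2" "J1 \<inter> J2 = {}" "finite J1" "finite J2"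
    using Suc.prems(1,2) by (auto simp: J1_def J2_def less_Suc_eq)
  define C1 where "C1 = {h \<in> space (MH T). \<forall>j\<in>J1. recall T (fst j) h (snd j) \<in> B j}"
  define C2 where "C2 = {x \<in> space (vec_borel N). \<forall>j\<in>J2. x (snd j) \<in> B j}"
  have C1: "C1 \<in> sets (MH T)"
    unfolding C1_def using J(3) Suc.prems(2,3)
    by (intro sets_Collect_finite_All_borel measurable_vec_borel_component[OF measurable_recall])
      (auto simp: J1_def)
  have C2: "C2 \<in> sets (vec_borel N)"
    unfolding C2_def using J(4) Suc.prems(2,3)
      by (intro sets_Collect_finite_All_borel) (auto simp: J2_def)
  have past: "H T -` C1 \<inter> space M = {\<omega> \<in> space M. \<forall>j\<in>J1. Z (fst j) \<omega> (snd j) \<in> B j}"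
    using measurable_space[OF measurable_past]
      by (auto simp: C1_def J1_def innovation_recall[symmetric])
  have now: "Z T -` C2 \<inter> space M = {\<omega> \<in> space M. \<forall>j\<in>J2. Z (fst j) \<omega> (snd j) \<in> B j}"
    using measurable_space[OF measurable_innovation] by (auto simp: C2_def J2_def)
  have "{\<omega> \<in> space M. \<forall>j\<in>J. Z (fst j) \<omega> (snd j) \<in> B j} = (\<lambda>\<omega>. (H T \<omega>, Z T \<omega>)) -` (C1 \<times> C2) \<inter> space M"
  proof -
    have "{\<omega> \<in> space M. \<forall>j\<in>J. Z (fst j) \<omega> (snd j) \<in> B j}
        = (H T -` C1 \<inter> space M) \<inter> (Z T -` C2 \<inter> space M)"
      unfolding past now J(1) by auto
    then show ?thesis by auto
  qed
  then have "prob {\<omega> \<in> space M. \<forall>j\<in>J. Z (fst j) \<omega> (snd j) \<in> B j}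
      = prob (H T -` C1 \<inter> space M) * prob (Z T -` C2 \<inter> space M)"
    using indep_pairD[OF indep_past C1 C2] by simp
  also have "prob (H T -` C1 \<inter> space M) = (\<Prod>j\<in>J1. measure std_normal (B j))"
    unfolding past using Suc.prems by (intro Suc.IH) (auto simp: J1_def)
  also have "prob (Z T -` C2 \<inter> space M) = measure (std_gauss_vec N) C2"
    using C2 by (simp add: measure_distr[OF measurable_innovation, symmetric] distr_innovation)
  also have "\<dots> = (\<Prod>j\<in>J2. measure std_normal (B j))"
  proof -
    have "inj_on snd J2" by (auto simp: J2_def inj_on_def prod_eq_iff)
    then have "measure (std_gauss_vec N) {x \<in> space (std_gauss_vec N). \<forall>j\<in>J2. x (snd j) \<in> B j}
        = (\<Prod>j\<in>J2. measure std_normal (B j))"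
      by (rule measure_std_gauss_vec_cylinder[OF J(4)]) (use Suc.prems in \<open>auto simp: J2_def\<close>)
    then show ?thesis by (simp add: C2_def space_std_gauss_vec)
  qed
  finally show ?case
    using J by (simp add: prod.union_disjoint)
qed

lemma indep_vars_innovations: "indep_vars (\<lambda>_. borel) (\<lambda>j \<omega>. Z (fst j) \<omega> (snd j)) (UNIV \<times> {..N})"
  unfolding indep_vars_def2
proof (intro conjI ballI)
  show "random_variable borel (\<lambda>\<omega>. Z (fst j) \<omega> (snd j))" if "j \<in> UNIV \<times> {..N}" for j
    using that by (auto intro: measurable_vec_borel_component[OF measurable_innovation])
  then show "indep_sets (\<lambda>j. {(\<lambda>\<omega>. Z (fst j) \<omega> (snd j)) -` A \<inter> space M |A. A \<in> sets borel})
      (UNIV \<times> {..N})"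
    unfolding indep_sets_def
  proof (intro conjI ballI allI impI)
    fix J A assume J: "J \<subseteq> UNIV \<times> {..N}" "J \<noteq> {}" "finite J"
      and A: "A \<in> Pi J (\<lambda>j. {(\<lambda>\<omega>. Z (fst j) \<omega> (snd j)) -` A \<inter> space M |A. A \<in> sets borel})"
    then have "\<forall>j\<in>J. \<exists>B. B \<in> sets borel \<and> A j = (\<lambda>\<omega>. Z (fst j) \<omega> (snd j)) -` B \<inter> space M"
      by (auto simp: Pi_iff)
    then obtain B where B: "\<And>j. j \<in> J \<Longrightarrow> B j \<in> sets borel"
      "\<And>j. j \<in> J \<Longrightarrow> A j = (\<lambda>\<omega>. Z (fst j) \<omega> (snd j)) -` B j \<inter> space M"
      by metis
    define T where "T = Suc (Max (fst ` J))"
    have JT: "K \<subseteq> {..<T} \<times> {..N}" if "K \<subseteq> J" for K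
      using that J by (force simp: T_def less_Suc_eq_le intro: Max_ge)
    have "prob (\<Inter>j\<in>J. A j) = prob {\<omega> \<in> space M. \<forall>j\<in>J. Z (fst j) \<omega> (snd j) \<in> B j}"
      using J(2) B(2) by (intro arg_cong[where f=prob]) auto
    also have "\<dots> = (\<Prod>j\<in>J. measure std_normal (B j))"
      using J B JT[of J] by (intro prob_innovations_cylinder) auto
    also have "\<dots> = (\<Prod>j\<in>J. prob (A j))"
    proof (rule prod.cong[OF refl])
      fix j assume j: "j \<in> J"
      have "A j = {\<omega> \<in> space M. \<forall>j'\<in>{j}. Z (fst j') \<omega> (snd j') \<in> B j'}"
        using B(2)[OF j] by auto
      then show "measure std_normal (B j) = prob (A j)"
        using prob_innovations_cylinder[of "{j}" T B] j B(1) JT[of "{j}"] by simp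
    qed
    finally show "prob (\<Inter>j\<in>J. A j) = (\<Prod>j\<in>J. prob (A j))" .
  qed (auto dest: measurable_sets)
qed

end

lemma smean_atMost: "smean N x = (\<Sum>i\<le>N. x i) / real (Suc N)"
  unfolding smean_def lessThan_Suc_atMost ..

lemma svar_atMost: "svar N x = (\<Sum>i\<le>N. (x i - smean N x)\<^sup>2) / real N"
  unfolding svar_def lessThan_Suc_atMost ..

lemma smean_cong: "(\<And>i. i \<le> N \<Longrightarrow> x i = x' i) \<Longrightarrow> smean N x = smean N x'"
  unfolding smean_atMost by (intro arg_cong2[where f="(/)"] sum.cong) auto

lemma svar_cong: "(\<And>i. i \<le> N \<Longrightarrow> x i = x' i) \<Longrightarrow> svar N x = svar N x'"
  unfolding svar_atMost using smean_cong[of N x x'] by (intro arg_cong2[where f="(/)"] sum.cong) auto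

lemma enkf_update_cong:
  "(\<And>i. i \<le> N \<Longrightarrow> x i = x' i) \<Longrightarrow> (\<And>i. i \<le> N \<Longrightarrow> v i = v' i) \<Longrightarrow> i \<le> N \<Longrightarrow>
    enkf_update N C D y v x i = enkf_update N C D y v' x' i"
  unfolding enkf_update_def using svar_cong[of N x x'] by simp

lemma sum_deviation_eq_0: "(\<Sum>i\<le>N. x i - smean N x) = 0"
  by (simp add: sum_subtractf smean_atMost del: of_nat_Suc)

lemma sum_sq_deviation: "(\<Sum>i\<le>N. (x i - smean N x)\<^sup>2) = real N * svar N x"
  by (cases "N = 0") (simp_all add: svar_atMost smean_atMost)

lemma svar_nonneg: "svar N x \<ge> 0"
  by (simp add: svar_def sum_nonneg)

lemma svar_eq_0_deviation: "svar N x = 0 \<Longrightarrow> 1 \<le> N \<Longrightarrow> i \<le> N \<Longrightarrow> x i - smean N x = 0"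
  using sum_sq_deviation[where N=N and x=x]
      sum_nonneg_eq_0_iff[of "{..N}" "\<lambda>i. (x i - smean N x)\<^sup>2"] by auto

lemma smean_linear: "smean N (\<lambda>i. a * x i + b * y i + c) = a * smean N x + b * smean N y + c"
  by (simp add: smean_atMost sum.distrib sum_distrib_left[symmetric] field_simps del: of_nat_Suc)

lemma sqrt_of_nat_mult_divide: "sqrt (real n) * (x / real n) = x / sqrt (real n)"
  by (cases "n = 0") (simp_all add: field_simps real_sqrt_mult[symmetric])

lemma svar_affine:
  assumes y: "\<And>i. i \<le> N \<Longrightarrow> y i = c * (g i + a i) + d" and a: "(\<Sum>i\<le>N. a i) = 0"
  shows "svar N y = c\<^sup>2 / real N * (\<Sum>i\<le>N. (g i - smean N g + a i)\<^sup>2)"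
proof -
  have "(\<Sum>i\<le>N. y i) = c * (\<Sum>i\<le>N. g i) + c * (\<Sum>i\<le>N. a i) + real (Suc N) * d"
    using y by (simp add: sum.distrib sum_distrib_left algebra_simps)
  then have "smean N y = c * smean N g + d"
    using a by (simp add: smean_atMost field_simps del: of_nat_Suc)
  then have "svar N y = (\<Sum>i\<le>N. (c * (g i - smean N g + a i))\<^sup>2) / real N"
    unfolding svar_atMost by (intro arg_cong2[where f="(/)"] sum.cong) (auto simp: y algebra_simps)
  then show ?thesis
    by (simp add: power_mult_distrib sum_distrib_left[symmetric])
qed

lemma svar_affine_aligned:
  assumes N: "1 \<le> N" and y: "\<And>i. i \<le> N \<Longrightarrow> y i = c * (g i + k * (x i - smean N x)) + d"
  shows "svar N y = c\<^sup>2 / real N *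
    (\<Sum>i<N. (aligning_rotation N (\<lambda>i. k * (x i - smean N x)) g i + sqrt (k\<^sup>2 * svar N x))\<^sup>2)"
proof -
  define a where "a = (\<lambda>i. k * (x i - smean N x))"
  have a: "(\<Sum>i\<le>N. a i) = 0"
    using sum_deviation_eq_0[where N=N and x=x] by (simp add: a_def sum_distrib_left[symmetric])
  have "(\<Sum>i\<le>N. (a i)\<^sup>2) = real N * (k\<^sup>2 * svar N x)"
    using sum_sq_deviation[where N=N and x=x]
      by (simp add: a_def power_mult_distrib sum_distrib_left[symmetric])
  then have shift: "sqrt (\<Sum>i\<le>N. (a i)\<^sup>2) / sqrt N = sqrt (k\<^sup>2 * svar N x)"
    using N by (simp add: real_sqrt_mult)
  have "svar N y = c\<^sup>2 / real N * (\<Sum>i\<le>N. (g i - smean N g + a i)\<^sup>2)"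
    by (rule svar_affine[OF _ a]) (simp add: y a_def)
  also have "(\<Sum>i\<le>N. (g i - smean N g + a i)\<^sup>2)
      = (\<Sum>i<N. (aligning_rotation N a g i + sqrt (k\<^sup>2 * svar N x))\<^sup>2)"
    using sum_sq_aligning_rotation_shift[OF N a, of g] by (simp add: shift smean_atMost)
  finally show ?thesis by (simp add: a_def)
qed

lemma measurable_smean:
  assumes x: "\<And>i. (\<lambda>p. x p i) \<in> borel_measurable Mp"
  shows "(\<lambda>p. smean N (x p)) \<in> borel_measurable Mp"
proof -
  have [measurable]: "(\<lambda>p. x p i) \<in> borel_measurable Mp" for i using x .
  show ?thesis unfolding smean_def by measurable
qed

lemma measurable_svar:
  assumes x: "\<And>i. (\<lambda>p. x p i) \<in> borel_measurable Mp"
  shows "(\<lambda>p. svar N (x p)) \<in> borel_measurable Mp"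
proof -
  have [measurable]: "(\<lambda>p. x p i) \<in> borel_measurable Mp" for i using x .
  have [measurable]: "(\<lambda>p. smean N (x p)) \<in> borel_measurable Mp" using measurable_smean[OF x] .
  show ?thesis unfolding svar_def by measurable
qed

lemma measurable_enkf_update:
  assumes x: "\<And>i. (\<lambda>p. x p i) \<in> borel_measurable Mp" and v: "\<And>i. (\<lambda>p. v p i) \<in> borel_measurable Mp"
    and y: "y \<in> borel_measurable Mp"
  shows "(\<lambda>p. enkf_update N C D (y p) (v p) (x p) i) \<in> borel_measurable Mp"
proof -
  have [measurable]: "(\<lambda>p. x p i) \<in> borel_measurable Mp" "(\<lambda>p. v p i) \<in> borel_measurable Mp"
      "y \<in> borel_measurable Mp"
    using x v y by auto
  have [measurable]: "(\<lambda>p. svar N (x p)) \<in> borel_measurable Mp" using measurable_svar[OF x] .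
  show ?thesis unfolding enkf_update_def gain_def by measurable
qed

section \<open>The ensemble Kalman filter driven by Gaussian innovations\<close>

locale enkf_setting = prob_space M for M :: "'a measure" +
  fixes A B C D P0 Xh0 :: real and N :: nat
    and X0 :: "'a \<Rightarrow> real" and V W :: "nat \<Rightarrow> 'a \<Rightarrow> real"
    and xi0 :: "nat \<Rightarrow> 'a \<Rightarrow> real" and EV EW :: "nat \<Rightarrow> nat \<Rightarrow> 'a \<Rightarrow> real"
  assumes B_nonzero: "B \<noteq> 0" and C_nonzero: "C \<noteq> 0" and D_nonzero: "D \<noteq> 0"
    and P0_pos: "P0 > 0" and N_pos: "N \<ge> 1"
    and distributed_xi0: "\<And>i. i \<le> N \<Longrightarrow> distributed M lborel (xi0 i) (normal_density Xh0 (sqrt P0))"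
    and distributed_EV: "\<And>n i. i \<le> N \<Longrightarrow> distributed M lborel (EV n i) std_normal_density"
    and distributed_EW: "\<And>n i. n \<ge> 1 \<Longrightarrow> i \<le> N \<Longrightarrow> distributed M lborel (EW n i) std_normal_density"
    and indep: "indep_vars (\<lambda>_. borel)
           (\<lambda>s. case s of SX0 \<Rightarrow> X0 | SV n \<Rightarrow> V n | SW n \<Rightarrow> W n | SXi i \<Rightarrow> xi0 i
                    | SEV n i \<Rightarrow> EV n i | SEW n i \<Rightarrow> EW n i)
           ({SX0} \<union> range SV \<union> SW ` {1..} \<union> SXi ` {..N}
             \<union> {SEV n i |n i. i \<le> N} \<union> {SEW n i |n i. 1 \<le> n \<and> i \<le> N})"
begin

definition source :: "src \<Rightarrow> 'a \<Rightarrow> real" where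
  "source s = (case s of SX0 \<Rightarrow> X0 | SV n \<Rightarrow> V n | SW n \<Rightarrow> W n | SXi i \<Rightarrow> xi0 i
                    | SEV n i \<Rightarrow> EV n i | SEW n i \<Rightarrow> EW n i)"

definition sources :: "src set" where
  "sources = {SX0} \<union> range SV \<union> SW ` {1..} \<union> SXi ` {..N}
    \<union> {SEV n i |n i. i \<le> N} \<union> {SEW n i |n i. 1 \<le> n \<and> i \<le> N}"

lemma indep_sources: "indep_vars (\<lambda>_. borel) source sources"
  using indep unfolding source_def[abs_def] sources_def .

definition realization :: "'a \<Rightarrow> src \<Rightarrow> real" where
  "realization \<omega> = (\<lambda>s. source s \<omega>)"

(* The steps of the filter consume the ensemble noise in blocks of N + 1 sources: block 0 is the
   initial ensemble, block 2 n + 1 the perturbations EV n of the n-th analysis and block 2 n + 2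
   the noises EW (n + 1) of the following forecast. *)
definition block_source :: "nat \<Rightarrow> nat \<Rightarrow> src" where
  "block_source t i =
    (if t = 0 then SXi i else if odd t then SEV ((t - 1) div 2) i else SEW (t div 2) i)"

definition model_sources :: "src set" where
  "model_sources = {SX0} \<union> range SV \<union> SW ` {1..}"

definition past_sources :: "nat \<Rightarrow> src set" where
  "past_sources T = model_sources \<union> (\<Union>t<T. block_source t ` {..N})"

definition past_realization :: "nat \<Rightarrow> 'a \<Rightarrow> src \<Rightarrow> real" where
  "past_realization T \<omega> = (\<lambda>s\<in>past_sources T. source s \<omega>)"

definition zero_extend :: "nat \<Rightarrow> (src \<Rightarrow> real) \<Rightarrow> src \<Rightarrow> real" where
  "zero_extend T h = (\<lambda>s. if s \<in> past_sources T then h s else 0)"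

definition standardize :: "nat \<Rightarrow> real \<Rightarrow> real" where
  "standardize t v = (if t = 0 then (v - Xh0) / sqrt P0 else v)"

definition block_noise :: "nat \<Rightarrow> 'a \<Rightarrow> nat \<Rightarrow> real" where
  "block_noise T \<omega> = (\<lambda>i\<in>{..N}. standardize T (source (block_source T i) \<omega>))"

fun signal_of :: "(src \<Rightarrow> real) \<Rightarrow> nat \<Rightarrow> real" where
  "signal_of g 0 = g SX0"
| "signal_of g (Suc k) = A * signal_of g k + B * g (SW (Suc k))"

definition obs_of :: "(src \<Rightarrow> real) \<Rightarrow> nat \<Rightarrow> real" where
  "obs_of g k = C * signal_of g k + D * g (SV k)"

definition forecast_of :: "(src \<Rightarrow> real) \<Rightarrow> nat \<Rightarrow> nat \<Rightarrow> real" where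
  "forecast_of g n = enkf_xi N A B C D (\<lambda>i. g (SXi i)) (obs_of g) (\<lambda>k i. g (SEV k i))
      (\<lambda>k i. g (SEW k i)) n"

definition analysis_of :: "(src \<Rightarrow> real) \<Rightarrow> nat \<Rightarrow> nat \<Rightarrow> real" where
  "analysis_of g n = enkf_update N C D (obs_of g n) (\<lambda>i. g (SEV n i)) (forecast_of g n)"

(* The ensemble produced by step T is c (block_noise T + block_shift T) + d, with scalars c, d
   determined by the previous steps; see ens_p_0_eq, ens_ph_eq and ens_p_Suc_eq. *)
definition block_shift :: "nat \<Rightarrow> (src \<Rightarrow> real) \<Rightarrow> nat \<Rightarrow> real" where
  "block_shift T g = (if T = 0 then (\<lambda>_. 0)
     else if odd T then
       (\<lambda>i. - (D / (C * svar N (forecast_of g ((T - 1) div 2))))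
          * (forecast_of g ((T - 1) div 2) i - smean N (forecast_of g ((T - 1) div 2))))
     else (\<lambda>i. (A / B) * (analysis_of g (T div 2 - 1) i - smean N (analysis_of g (T div 2 - 1)))))"

definition innovation :: "nat \<Rightarrow> 'a \<Rightarrow> nat \<Rightarrow> real" where
  "innovation T \<omega> = aligning_rotation N (block_shift T (realization \<omega>)) (block_noise T \<omega>)"

definition recall_innovation :: "nat \<Rightarrow> nat \<Rightarrow> (src \<Rightarrow> real) \<Rightarrow> nat \<Rightarrow> real" where
  "recall_innovation T t h =
    aligning_rotation N (block_shift t (zero_extend t h))
        (\<lambda>i\<in>{..N}. standardize t (h (block_source t i)))"

lemma signal_of_realization: "signal_of (realization \<omega>) k = model_X A B X0 W k \<omega>"
  by (induction k) (simp_all add: realization_def source_def)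

lemma obs_of_realization: "obs_of (realization \<omega>) k = model_Y A B C D X0 W V k \<omega>"
  by (simp add: obs_of_def model_Y_def signal_of_realization) (simp add: realization_def source_def)

lemma forecast_of_realization: "forecast_of (realization \<omega>) n = ens_xi N A B C D X0 V W xi0 EV EW n \<omega>"
proof -
  have "obs_of (realization \<omega>) = (\<lambda>k. model_Y A B C D X0 W V k \<omega>)"
    by (rule ext) (simp add: obs_of_realization)
  then show ?thesis unfolding forecast_of_def ens_xi_def by (simp add: realization_def source_def)
qed

lemma analysis_of_realization: "analysis_of (realization \<omega>) n = ens_xih N A B C D X0 V W xi0 EV EW n \<omega>"
  unfolding analysis_of_def ens_xih_def forecast_of_realization obs_of_realization
    by (simp add: realization_def source_def)

lemma signal_of_cong: "(\<And>s. s \<in> model_sources \<Longrightarrow> g s = g' s) \<Longrightarrow> signal_of g k = signal_of g' k"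
  by (induction k) (auto simp: model_sources_def)

lemma obs_of_cong: "(\<And>s. s \<in> model_sources \<Longrightarrow> g s = g' s) \<Longrightarrow> obs_of g k = obs_of g' k"
  unfolding obs_of_def using signal_of_cong[of g g' k] by (auto simp: model_sources_def)

lemma model_sources_past: "model_sources \<subseteq> past_sources T" by (auto simp: past_sources_def)

lemma past_sources_mono: "t \<le> T \<Longrightarrow> past_sources t \<subseteq> past_sources T"
  unfolding past_sources_def by (intro Un_mono subset_refl UN_mono) auto

lemma SXi_past: "0 < T \<Longrightarrow> i \<le> N \<Longrightarrow> SXi i \<in> past_sources T"
  unfolding past_sources_def by (rule UnI2)
      (auto simp: block_source_def intro!: bexI[of _ 0] image_eqI[of _ _ i])

lemma SEV_past: "2 * k + 1 < T \<Longrightarrow> i \<le> N \<Longrightarrow> SEV k i \<in> past_sources T"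
  unfolding past_sources_def by (rule UnI2)
      (auto simp: block_source_def intro!: bexI[of _ "2 * k + 1"] image_eqI[of _ _ i])

lemma SEW_past: "1 \<le> k \<Longrightarrow> 2 * k < T \<Longrightarrow> i \<le> N \<Longrightarrow> SEW k i \<in> past_sources T"
  unfolding past_sources_def by (rule UnI2)
      (auto simp: block_source_def intro!: bexI[of _ "2 * k"] image_eqI[of _ _ i])

lemma forecast_of_cong:
  assumes "\<And>s. s \<in> past_sources (2 * n + 1) \<Longrightarrow> g s = g' s"
  shows "i \<le> N \<Longrightarrow> forecast_of g n i = forecast_of g' n i"
  using assms
proof (induction n arbitrary: i)
  case 0
  then show ?case using SXi_past[of 1 i] by (simp add: forecast_of_def)
next
  case (Suc n)
  have sub: "past_sources (2 * n + 1) \<subseteq> past_sources (2 * Suc n + 1)" by (rule past_sources_mono) simp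
  have IH: "forecast_of g n j = forecast_of g' n j" if "j \<le> N" for j
    using Suc.IH[OF that] Suc.prems(2) sub by auto
  have Y: "obs_of g n = obs_of g' n" using obs_of_cong[of g g' n] Suc.prems(2) model_sources_past
    by auto
  have EVe: "g (SEV n j) = g' (SEV n j)" if "j \<le> N" for j
    using Suc.prems(2) SEV_past[of n "2 * Suc n + 1" j] that by auto
  have EWe: "g (SEW (Suc n) j) = g' (SEW (Suc n) j)" if "j \<le> N" for j
    using Suc.prems(2) SEW_past[of "Suc n" "2 * Suc n + 1" j] that by auto
  have U: "enkf_update N C D (obs_of g n) (\<lambda>i. g (SEV n i)) (forecast_of g n) i
      = enkf_update N C D (obs_of g' n) (\<lambda>i. g' (SEV n i)) (forecast_of g' n) i"
    unfolding Y by (rule enkf_update_cong) (use IH EVe Suc.prems(1) in auto)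
  show ?case using U EWe[OF Suc.prems(1)] by (simp add: forecast_of_def)
qed

lemma analysis_of_cong:
  assumes "\<And>s. s \<in> past_sources (2 * n + 2) \<Longrightarrow> g s = g' s" "i \<le> N"
  shows "analysis_of g n i = analysis_of g' n i"
proof -
  have sub: "past_sources (2 * n + 1) \<subseteq> past_sources (2 * n + 2)" by (rule past_sources_mono) simp
  have IH: "forecast_of g n j = forecast_of g' n j" if "j \<le> N" for j
    using forecast_of_cong[OF _ that, of n g g'] assms(1) sub by auto
  have Y: "obs_of g n = obs_of g' n" using obs_of_cong[of g g' n] assms(1) model_sources_past by auto
  have EVe: "g (SEV n j) = g' (SEV n j)" if "j \<le> N" for j
    using assms(1) SEV_past[of n "2 * n + 2" j] that by auto
  show ?thesis unfolding analysis_of_def Y by (rule enkf_update_cong) (use IH EVe assms(2) in auto)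
qed

lemma block_shift_cong:
  assumes "\<And>s. s \<in> past_sources T \<Longrightarrow> g s = g' s" "i \<le> N"
  shows "block_shift T g i = block_shift T g' i"
proof (cases "T = 0")
  case True then show ?thesis by (simp add: block_shift_def)
next
  case F: False
  show ?thesis
  proof (cases "odd T")
    case True
    define n where "n = (T - 1) div 2"
    have T: "T = 2 * n + 1" using True by (simp add: n_def)
    have e: "forecast_of g n j = forecast_of g' n j" if "j \<le> N" for j
      using forecast_of_cong[OF _ that, of n g g'] assms(1) T by auto
    have "smean N (forecast_of g n) = smean N (forecast_of g' n)"
        "svar N (forecast_of g n) = svar N (forecast_of g' n)"
      using e by (auto intro: smean_cong svar_cong)
    then show ?thesis using e[OF assms(2)] unfolding T by (simp add: block_shift_def)
  next
    case False
    define n where "n = T div 2 - 1"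
    have T: "T = 2 * n + 2" using False F unfolding n_def by (auto elim!: evenE)
    have e: "analysis_of g n j = analysis_of g' n j" if "j \<le> N" for j
      using analysis_of_cong[OF _ that, of n g g'] assms(1) T by auto
    have "smean N (analysis_of g n) = smean N (analysis_of g' n)"
      using e by (auto intro: smean_cong)
    then show ?thesis using e[OF assms(2)] unfolding T by (simp add: block_shift_def)
  qed
qed

lemma block_shift_zero_extend_past:
  "t \<le> T \<Longrightarrow> i \<le> N \<Longrightarrow> block_shift t (zero_extend t (past_realization T \<omega>)) i
      = block_shift t (realization \<omega>) i"
  by (rule block_shift_cong) (auto simp: zero_extend_def past_realization_def realization_def
      dest: past_sources_mono)

lemma measurable_signal_of:
  assumes q: "\<And>s. (\<lambda>p. q p s) \<in> borel_measurable Mp"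
  shows "(\<lambda>p. signal_of (q p) k) \<in> borel_measurable Mp"
proof (induction k)
  case 0 then show ?case using q by simp
next
  case (Suc k)
  have [measurable]: "(\<lambda>p. q p (SW (Suc k))) \<in> borel_measurable Mp" using q .
  have [measurable]: "(\<lambda>p. signal_of (q p) k) \<in> borel_measurable Mp" using Suc .
  show ?case by simp
qed

lemma measurable_obs_of:
  assumes q: "\<And>s. (\<lambda>p. q p s) \<in> borel_measurable Mp"
  shows "(\<lambda>p. obs_of (q p) k) \<in> borel_measurable Mp"
proof -
  have [measurable]: "(\<lambda>p. q p (SV k)) \<in> borel_measurable Mp" using q .
  have [measurable]: "(\<lambda>p. signal_of (q p) k) \<in> borel_measurable Mp" using measurable_signal_of[OF q] .
  show ?thesis unfolding obs_of_def by simp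
qed

lemma measurable_forecast_of:
  assumes q: "\<And>s. (\<lambda>p. q p s) \<in> borel_measurable Mp"
  shows "(\<lambda>p. forecast_of (q p) n i) \<in> borel_measurable Mp"
proof (induction n arbitrary: i)
  case 0 then show ?case using q by (simp add: forecast_of_def)
next
  case (Suc n)
  have u: "(\<lambda>p. enkf_update N C D (obs_of (q p) n) (\<lambda>i. q p (SEV n i)) (forecast_of (q p) n) i) \<in>
      borel_measurable Mp"
    by (rule measurable_enkf_update) (use Suc q measurable_obs_of[OF q] in auto)
  have [measurable]: "(\<lambda>p. q p (SEW (Suc n) i)) \<in> borel_measurable Mp" using q .
  have [measurable]: "(\<lambda>p. enkf_update N C D (obs_of (q p) n) (\<lambda>i. q p (SEV n i))
      (forecast_of (q p) n) i) \<in> borel_measurable Mp"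
    using u .
  have eq: "(\<lambda>p. forecast_of (q p) (Suc n) i)
      = (\<lambda>p. A * enkf_update N C D (obs_of (q p) n) (\<lambda>i. q p (SEV n i)) (forecast_of (q p) n) i + B
          * q p (SEW (Suc n) i))"
    by (simp add: forecast_of_def)
  show ?case unfolding eq by measurable
qed

lemma measurable_analysis_of:
  assumes q: "\<And>s. (\<lambda>p. q p s) \<in> borel_measurable Mp"
  shows "(\<lambda>p. analysis_of (q p) n i) \<in> borel_measurable Mp"
  unfolding analysis_of_def by (rule measurable_enkf_update)
    (use measurable_forecast_of[OF q] q measurable_obs_of[OF q] in auto)

lemma measurable_block_shift:
  assumes q: "\<And>s. (\<lambda>p. q p s) \<in> borel_measurable Mp"
  shows "(\<lambda>p. block_shift T (q p) i) \<in> borel_measurable Mp"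
proof -
  have [measurable]: "(\<lambda>p. forecast_of (q p) n j) \<in> borel_measurable Mp" for n j
    using measurable_forecast_of[OF q] .
  have [measurable]: "(\<lambda>p. analysis_of (q p) n j) \<in> borel_measurable Mp" for n j
    using measurable_analysis_of[OF q] .
  have [measurable]: "(\<lambda>p. svar N (forecast_of (q p) n)) \<in> borel_measurable Mp" for n
    using measurable_svar[OF measurable_forecast_of[OF q]] .
  have [measurable]: "(\<lambda>p. smean N (forecast_of (q p) n)) \<in> borel_measurable Mp" for n
    using measurable_smean[OF measurable_forecast_of[OF q]] .
  have [measurable]: "(\<lambda>p. smean N (analysis_of (q p) n)) \<in> borel_measurable Mp" for n
    using measurable_smean[OF measurable_analysis_of[OF q]] .
  show ?thesis
  proof (cases "T = 0")
    case True then show ?thesis by (simp add: block_shift_def)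
  next
    case False
    show ?thesis
    proof (cases "odd T")
      case True
      have eq: "(\<lambda>p. block_shift T (q p) i) =
          (\<lambda>p. - (D / (C * svar N (forecast_of (q p) ((T - 1) div 2))))
              * (forecast_of (q p) ((T - 1) div 2) i - smean N (forecast_of (q p) ((T - 1) div 2))))"
        using False True by (simp add: block_shift_def)
      show ?thesis unfolding eq by measurable
    next
      case F2: False
      have eq: "(\<lambda>p. block_shift T (q p) i) =
          (\<lambda>p. (A / B) * (analysis_of (q p) (T div 2 - 1) i
              - smean N (analysis_of (q p) (T div 2 - 1))))"
        using False F2 by (simp add: block_shift_def)
      show ?thesis unfolding eq by measurable
    qed
  qed
qed

lemma block_source_in_sources: "i \<le> N \<Longrightarrow> block_source t i \<in> sources"
proof -
  assume i: "i \<le> N"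
  consider "t = 0" | "odd t" | "t \<noteq> 0" "even t" by auto
  then show ?thesis
  proof cases
    case 1 then show ?thesis using i by (simp add: block_source_def sources_def)
  next
    case 2 then show ?thesis using i by (auto simp: block_source_def sources_def)
  next
    case 3
    then have "1 \<le> t div 2" by (auto elim!: evenE)
    then show ?thesis using 3 i by (auto simp: block_source_def sources_def)
  qed
qed

lemma block_source_eq: "block_source t i = block_source t' i' \<Longrightarrow> t = t' \<and> i = i'"
  unfolding block_source_def
  by (auto split: if_splits elim!: oddE evenE)

lemma block_source_not_model: "block_source t i \<notin> model_sources"
  by (auto simp: block_source_def model_sources_def)

lemma past_sources_subset: "past_sources T \<subseteq> sources"
  using block_source_in_sources unfolding past_sources_def model_sources_def sources_def by auto

lemma block_source_past: "t < T \<Longrightarrow> i \<le> N \<Longrightarrow> block_source t i \<in> past_sources T"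
  unfolding past_sources_def by auto

lemma block_past_disjoint: "block_source T ` {..N} \<inter> past_sources T = {}"
  unfolding past_sources_def using block_source_not_model block_source_eq by fastforce

lemma inj_block_source: "inj_on (block_source T) I"
  by (auto intro!: inj_onI dest: block_source_eq)

lemma measurable_standardize[measurable]: "standardize t \<in> borel_measurable borel"
  unfolding standardize_def by measurable

lemma indep_pair_past_block_noise: "indep_pair (PiM (past_sources T) (\<lambda>_. borel))
    (past_realization T) (vec_borel N) (block_noise T)"
proof -
  have iv: "indep_var (PiM (past_sources T) (\<lambda>_. borel))
      (\<lambda>\<omega>. restrict (\<lambda>s. source s \<omega>) (past_sources T))
      (PiM (block_source T ` {..N}) (\<lambda>_. borel))
          (\<lambda>\<omega>. restrict (\<lambda>s. source s \<omega>) (block_source T ` {..N}))"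
    by (rule indep_var_restrict[OF indep_sources])
      (use block_past_disjoint past_sources_subset block_source_in_sources in auto)
  define gm where "gm = (\<lambda>r. \<lambda>i\<in>{..N}. standardize T (r (block_source T i)))"
  have gm: "gm \<in> measurable (PiM (block_source T ` {..N}) (\<lambda>_. borel)) (vec_borel N)"
    unfolding gm_def
  proof (rule measurable_restrict)
    fix i assume "i \<in> {..N}"
    then have [measurable]: "(\<lambda>r. r (block_source T i)) \<in> borel_measurable
        (PiM (block_source T ` {..N}) (\<lambda>_. borel))"
      by simp
    show "(\<lambda>r. standardize T (r (block_source T i))) \<in> borel_measurable
        (PiM (block_source T ` {..N}) (\<lambda>_. borel))"
      by measurable
  qed
  have "indep_pair (PiM (past_sources T) (\<lambda>_. borel))
      (\<lambda>\<omega>. (\<lambda>h. h) (restrict (\<lambda>s. source s \<omega>) (past_sources T)))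
      (vec_borel N) (\<lambda>\<omega>. gm (restrict (\<lambda>s. source s \<omega>) (block_source T ` {..N})))"
    by (rule indep_pair_compose[OF indep_var_imp_indep_pair[OF iv] measurable_ident_sets[OF refl] gm])
  moreover have "(\<lambda>\<omega>. (\<lambda>h. h) (restrict (\<lambda>s. source s \<omega>) (past_sources T))) = past_realization T"
    by (rule ext) (simp add: past_realization_def)
  moreover have "(\<lambda>\<omega>. gm (restrict (\<lambda>s. source s \<omega>) (block_source T ` {..N}))) = block_noise T"
    by (rule ext) (auto simp: block_noise_def gm_def intro!: restrict_ext)
  ultimately show ?thesis by simp
qed

lemma distr_std_normal: "distributed M lborel Z std_normal_density \<Longrightarrow> distr M borel Z = std_normal"
  unfolding distributed_def std_normal_def
  by (metis (no_types, lifting) distr_cong sets_lborel)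

lemma distr_block_noise_component: "i \<le> N
    \<Longrightarrow> distr M borel (\<lambda>\<omega>. standardize T (source (block_source T i) \<omega>)) = std_normal"
proof -
  assume i: "i \<le> N"
  consider "T = 0" | "odd T" | "T \<noteq> 0" "even T" by auto
  then show ?thesis
  proof cases
    case 1
    have "distributed M lborel (\<lambda>x. (xi0 i x - Xh0) / sqrt P0) std_normal_density"
      using normal_standard_normal_convert[of "sqrt P0" "xi0 i" Xh0] distributed_xi0[OF i] P0_pos
        by simp
    then show ?thesis using 1 by (simp add: standardize_def block_source_def source_def
        distr_std_normal)
  next
    case 2
    then have "T \<noteq> 0" by (metis odd_pos not_gr_zero)
    then show ?thesis using 2 distributed_EV[OF i]
      by (simp add: standardize_def block_source_def source_def distr_std_normal)
  next
    case 3
    then have "1 \<le> T div 2" by (auto elim!: evenE)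
    then show ?thesis using 3 distributed_EW[OF _ i]
      by (simp add: standardize_def block_source_def source_def distr_std_normal)
  qed
qed

lemma distr_block_noise: "distr M (vec_borel N) (block_noise T) = std_gauss_vec N"
proof -
  have i1: "indep_vars (\<lambda>_. borel) source (block_source T ` {..N})"
    by (rule indep_vars_subset[OF indep_sources]) (use block_source_in_sources in auto)
  have i2: "indep_vars (\<lambda>_. borel) (\<lambda>i. source (block_source T i)) {..N}"
    using indep_vars_reindex[OF i1 inj_block_source] by simp
  have i3: "indep_vars (\<lambda>_. borel) (\<lambda>i \<omega>. standardize T (source (block_source T i) \<omega>)) {..N}"
    by (rule indep_vars_compose2[OF i2]) simp
  have rv: "\<And>i. i \<in> {..N} \<Longrightarrow> random_variable borel (\<lambda>\<omega>. standardize T (source (block_source T i) \<omega>))"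
    using i3 unfolding indep_vars_def2 by auto
  have "distr M (PiM {..N} (\<lambda>_. borel)) (\<lambda>x. \<lambda>i\<in>{..N}. standardize T (source (block_source T i) x))
      = PiM {..N} (\<lambda>i. distr M borel (\<lambda>\<omega>. standardize T (source (block_source T i) \<omega>)))"
    using indep_vars_iff_distr_eq_PiM'[where I="{..N}" and M'="\<lambda>_. borel"
        and X="\<lambda>i \<omega>. standardize T (source (block_source T i) \<omega>)"] i3 rv by auto
  also have "\<dots> = PiM {..N} (\<lambda>_. std_normal)"
    by (rule PiM_cong) (auto simp: distr_block_noise_component)
  finally show ?thesis unfolding block_noise_def std_gauss_vec_def .
qed

lemma measurable_zero_extend:
  assumes "past_sources t \<subseteq> J"
  shows "(\<lambda>h. zero_extend t h s) \<in> borel_measurable (PiM J (\<lambda>_. borel))"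
proof (cases "s \<in> past_sources t")
  case True
  then have "s \<in> J" using assms by auto
  then show ?thesis using True by (simp add: zero_extend_def)
qed (simp add: zero_extend_def)

lemma measurable_recall_innovation:
  "t < T \<Longrightarrow> recall_innovation T t \<in> measurable (PiM (past_sources T) (\<lambda>_. borel)) (vec_borel N)"
proof -
  assume tT: "t < T"
  have sub: "past_sources t \<subseteq> past_sources T" using tT by (intro past_sources_mono) simp
  have x: "(\<lambda>h. (\<lambda>i\<in>{..N}. standardize t (h (block_source t i))) i) \<in> borel_measurable
      (PiM (past_sources T) (\<lambda>_. borel))" if "i \<le> N" for i
  proof -
    have [measurable]: "(\<lambda>h. h (block_source t i)) \<in> borel_measurable
        (PiM (past_sources T) (\<lambda>_. borel))"
      using block_source_past[OF tT that] by simp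
    show ?thesis using that by simp
  qed
  show ?thesis unfolding recall_innovation_def[abs_def]
    by (rule measurable_aligning_rotation_param[OF N_pos])
      (use measurable_block_shift[OF measurable_zero_extend[OF sub]] x in auto)
qed

lemma innovation_past:
  "t \<le> T \<Longrightarrow> innovation t \<omega> = aligning_rotation N
      (block_shift t (zero_extend t (past_realization T \<omega>))) (block_noise t \<omega>)"
  unfolding innovation_def by (rule aligning_rotation_cong) (simp add: block_shift_zero_extend_past)

lemma innovation_recall: "t < T \<Longrightarrow> innovation t \<omega> = recall_innovation T t (past_realization T \<omega>)"
proof -
  assume tT: "t < T"
  have "block_noise t \<omega> = (\<lambda>i\<in>{..N}. standardize t (past_realization T \<omega> (block_source t i)))"
    using block_source_past[OF tT] by (auto simp: block_noise_def past_realization_def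
        intro!: restrict_ext)
  then show ?thesis
    using tT by (simp add: innovation_past[of t T] recall_innovation_def)
qed

lemma innovation_indep_law:
  shows "indep_pair (PiM (past_sources T) (\<lambda>_. borel)) (past_realization T) (vec_borel N)
      (innovation T)"
    and "distr M (vec_borel N) (innovation T) = std_gauss_vec N"
proof -
  let ?MH = "PiM (past_sources T) (\<lambda>_. borel)"
  define Phi where "Phi h x = aligning_rotation N (block_shift T (zero_extend T h)) x" for h x
  have "(\<lambda>p. zero_extend T (fst p) s) \<in> borel_measurable (?MH \<Otimes>\<^sub>M vec_borel N)" for s
    using measurable_comp[OF measurable_fst measurable_zero_extend[of T "past_sources T" s]]
      by (simp add: comp_def)
  then have "(\<lambda>p. Phi (fst p) (snd p)) \<in> measurable (?MH \<Otimes>\<^sub>M vec_borel N) (vec_borel N)"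
    unfolding Phi_def
    by (intro measurable_aligning_rotation_param[OF N_pos] measurable_block_shift
        measurable_vec_borel_component[OF measurable_snd])
  then have Phi: "(\<lambda>(h, x). Phi h x) \<in> measurable (?MH \<Otimes>\<^sub>M vec_borel N) (vec_borel N)"
    by (simp add: split_beta')
  have preserving: "distr (distr M (vec_borel N) (block_noise T)) (vec_borel N) (Phi h)
      = distr M (vec_borel N) (block_noise T)" for h
    using preserves_std_gauss_vec_aligning_rotation[OF N_pos]
    unfolding distr_block_noise Phi_def preserves_std_gauss_vec_def by simp
  have innovation: "innovation T = (\<lambda>\<omega>. Phi (past_realization T \<omega>) (block_noise T \<omega>))"
    by (auto simp: Phi_def innovation_past)
  show "indep_pair ?MH (past_realization T) (vec_borel N) (innovation T)"
    unfolding innovation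
    by (rule indep_pair_law_preserving_transform(1)[OF indep_pair_past_block_noise Phi preserving])
  show "distr M (vec_borel N) (innovation T) = std_gauss_vec N"
    unfolding innovation indep_pair_law_preserving_transform(2)[OF indep_pair_past_block_noise Phi
        preserving]
    by (rule distr_block_noise)
qed

sublocale gauss_innovations M N "\<lambda>T. PiM (past_sources T) (\<lambda>_. borel)"
    past_realization innovation recall_innovation
  by unfold_locales (simp_all add: innovation_indep_law measurable_recall_innovation innovation_recall)

lemma innovation_top: "innovation T \<omega> N = (\<Sum>i\<le>N. block_noise T \<omega> i) / sqrt (Suc N)"
  unfolding innovation_def by (rule aligning_rotation_top[OF N_pos])

lemma block_noise_0: "i \<le> N \<Longrightarrow> block_noise 0 \<omega> i = (xi0 i \<omega> - Xh0) / sqrt P0"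
  by (simp add: block_noise_def standardize_def block_source_def source_def)

lemma block_noise_odd: "i \<le> N \<Longrightarrow> block_noise (Suc (2 * n)) \<omega> i = EV n i \<omega>"
  by (simp add: block_noise_def standardize_def block_source_def source_def)

lemma block_noise_even: "i \<le> N \<Longrightarrow> block_noise (Suc (Suc (2 * n))) \<omega> i = EW (Suc n) i \<omega>"
proof -
  assume "i \<le> N"
  moreover have "(2 * n + 2) div 2 = Suc n" by simp
  ultimately show ?thesis by (simp add: block_noise_def standardize_def block_source_def source_def)
qed

lemma block_shift_0: "block_shift 0 g = (\<lambda>_. 0)" by (simp add: block_shift_def)

lemma block_shift_odd: "block_shift (Suc (2 * n)) g
    = (\<lambda>i. - (D / (C * svar N (forecast_of g n))) * (forecast_of g n i - smean N (forecast_of g n)))"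
  by (simp add: block_shift_def)

lemma block_shift_even: "block_shift (Suc (Suc (2 * n))) g
    = (\<lambda>i. (A / B) * (analysis_of g n i - smean N (analysis_of g n)))"
proof -
  have "(2 * n + 2) div 2 - 1 = n" by simp
  then show ?thesis by (simp add: block_shift_def)
qed

lemma ens_xi_Suc:
  "ens_xi N A B C D X0 V W xi0 EV EW (Suc n) \<omega> i = A * ens_xih N A B C D X0 V W xi0 EV EW n \<omega> i + B
      * EW (Suc n) i \<omega>"
  by (simp add: ens_xi_def ens_xih_def)

lemma ens_p_0_eq: "ens_p N A B C D X0 V W xi0 EV EW 0 \<omega> = P0 / real N * (\<Sum>i<N. (innovation 0 \<omega> i)\<^sup>2)"
proof -
  let ?g = "block_noise 0 \<omega>"
  have "ens_p N A B C D X0 V W xi0 EV EW 0 \<omega>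
      = (sqrt P0)\<^sup>2 / real N * (\<Sum>i<N. (aligning_rotation N (\<lambda>i. 0 * (?g i - smean N ?g)) ?g i
          + sqrt (0\<^sup>2 * svar N ?g))\<^sup>2)"
    unfolding ens_p_def by (rule svar_affine_aligned[OF N_pos])
      (use P0_pos in \<open>simp add: ens_xi_def block_noise_0\<close>)
  then show ?thesis
    using P0_pos by (simp add: innovation_def block_shift_0)
qed

lemma ens_xih_affine:
  fixes n :: nat and \<omega> :: 'a
  defines "x \<equiv> ens_xi N A B C D X0 V W xi0 EV EW n \<omega>"
    and "p \<equiv> svar N (ens_xi N A B C D X0 V W xi0 EV EW n \<omega>)"
    and "gn \<equiv> gain C D (svar N (ens_xi N A B C D X0 V W xi0 EV EW n \<omega>))"
  assumes i: "i \<le> N"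
  shows "ens_xih N A B C D X0 V W xi0 EV EW n \<omega> i = (- gn * D) *
      (block_noise (2 * n + 1) \<omega> i + (- (D / (C * p))) * (x i - smean N x))
    + ((1 - gn * C) * smean N x + gn * model_Y A B C D X0 W V n \<omega>)"
proof -
  define Y where "Y = model_Y A B C D X0 W V n \<omega>"
  have xih: "ens_xih N A B C D X0 V W xi0 EV EW n \<omega> i = x i + gn * (Y - C * x i - D * EV n i \<omega>)"
    by (simp add: ens_xih_def enkf_update_def x_def Y_def gn_def)
  have noise: "block_noise (2 * n + 1) \<omega> i = EV n i \<omega>"
    using i by (simp add: block_noise_odd)
  show ?thesis
  proof (cases "p = 0")
    case True
    then have "x i - smean N x = 0" using svar_eq_0_deviation[OF _ N_pos i] by (simp add: p_def x_def)
    then show ?thesis using True noise unfolding p_def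
      by (simp add: xih Y_def gn_def gain_def algebra_simps)
  next
    case False
    have "C\<^sup>2 * p + D\<^sup>2 > 0"
      using D_nonzero svar_nonneg[of N x] by (simp add: p_def x_def add_nonneg_pos)
    then have "1 - gn * C = gn * (D * (D / (C * p)))"
      using False C_nonzero by (simp add: gn_def p_def gain_def field_simps power2_eq_square)
    moreover have "(- gn * D) * (EV n i \<omega> + (- (D / (C * p))) * (x i - smean N x))
        + ((1 - gn * C) * smean N x + gn * Y)
        = x i + gn * (Y - C * x i - D * EV n i \<omega>) + (gn * (D * (D / (C * p))) - (1 - gn * C))
            * (x i - smean N x)"
      using False C_nonzero by (simp add: field_simps)
    ultimately show ?thesis
      using noise by (simp add: xih Y_def)
  qed
qed

lemma ens_ph_eq:
  "ens_ph N A B C D X0 V W xi0 EV EW n \<omega> =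
     (ens_p N A B C D X0 V W xi0 EV EW n \<omega> / (1 + (C / D)\<^sup>2 * ens_p N A B C D X0 V W xi0 EV EW n \<omega>))\<^sup>2
       * ((C / D)\<^sup>2 / real N)
       * (\<Sum>i<N. (innovation (2 * n + 1) \<omega> i + sqrt
           (1 / ((C / D)\<^sup>2 * ens_p N A B C D X0 V W xi0 EV EW n \<omega>)))\<^sup>2)"
proof -
  define S where "S = (C / D)\<^sup>2"
  define x where "x = ens_xi N A B C D X0 V W xi0 EV EW n \<omega>"
  define p where "p = svar N x"
  define k where "k = - (D / (C * p))"
  define gn where "gn = gain C D p"
  have "ens_ph N A B C D X0 V W xi0 EV EW n \<omega> = (- gn * D)\<^sup>2 / real N *
      (\<Sum>i<N. (aligning_rotation N (\<lambda>i. k * (x i - smean N x)) (block_noise (2 * n + 1) \<omega>) i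
          + sqrt (k\<^sup>2 * p))\<^sup>2)"
    unfolding ens_ph_def p_def x_def k_def gn_def by (rule svar_affine_aligned[OF N_pos ens_xih_affine])
  also have "aligning_rotation N (\<lambda>i. k * (x i - smean N x)) (block_noise (2 * n + 1) \<omega>)
      = innovation (2 * n + 1) \<omega>"
    by (simp add: innovation_def block_shift_odd forecast_of_realization k_def p_def x_def)
  also have "k\<^sup>2 * p = 1 / (S * p)"
    using C_nonzero D_nonzero by (cases "p = 0")
        (simp_all add: k_def S_def field_simps power2_eq_square)
  also have "(- gn * D)\<^sup>2 = (p / (1 + S * p))\<^sup>2 * S"
  proof -
    have "C\<^sup>2 * p + D\<^sup>2 > 0"
      using D_nonzero svar_nonneg[of N x] by (simp add: p_def add_nonneg_pos)
    moreover have "1 + S * p = (C\<^sup>2 * p + D\<^sup>2) / D\<^sup>2"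
      using D_nonzero by (simp add: S_def field_simps power2_eq_square)
    ultimately show ?thesis
      using D_nonzero by (simp add: gn_def gain_def S_def field_simps power2_eq_square)
  qed
  finally show ?thesis
    by (simp add: S_def p_def x_def ens_p_def)
qed

lemma ens_p_Suc_eq:
  "ens_p N A B C D X0 V W xi0 EV EW (Suc n) \<omega> =
     B\<^sup>2 / real N * (\<Sum>i<N. (innovation (2 * n + 2) \<omega> i
         + sqrt (A\<^sup>2 * ens_ph N A B C D X0 V W xi0 EV EW n \<omega> / B\<^sup>2))\<^sup>2)"
proof -
  define x where "x = ens_xih N A B C D X0 V W xi0 EV EW n \<omega>"
  have update: "ens_xi N A B C D X0 V W xi0 EV EW (Suc n) \<omega> i
      = B * (block_noise (2 * n + 2) \<omega> i + (A / B) * (x i - smean N x)) + A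
          * smean N x" if "i \<le> N" for i
  proof -
    have "block_noise (2 * n + 2) \<omega> i = EW (Suc n) i \<omega>"
      using that by (simp add: block_noise_even)
    then show ?thesis using B_nonzero by (simp add: ens_xi_Suc x_def field_simps)
  qed
  have "ens_p N A B C D X0 V W xi0 EV EW (Suc n) \<omega> = B\<^sup>2 / real N *
      (\<Sum>i<N. (aligning_rotation N (\<lambda>i. (A / B) * (x i - smean N x)) (block_noise (2 * n + 2) \<omega>) i
        + sqrt ((A / B)\<^sup>2 * svar N x))\<^sup>2)"
    unfolding ens_p_def by (rule svar_affine_aligned[OF N_pos update])
  also have "aligning_rotation N (\<lambda>i. (A / B) * (x i - smean N x)) (block_noise (2 * n + 2) \<omega>)
      = innovation (2 * n + 2) \<omega>"
    by (simp add: innovation_def block_shift_even analysis_of_realization x_def)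
  finally show ?thesis
    by (simp add: x_def ens_ph_def power_divide)
qed

lemma ens_u0_eq: "ens_u0 N A B C D Xh0 X0 V W xi0 EV EW \<omega> = sqrt P0 * innovation 0 \<omega> N"
proof -
  have "(\<Sum>i\<le>N. block_noise 0 \<omega> i) = (\<Sum>i\<le>N. xi0 i \<omega> - Xh0) / sqrt P0"
    by (simp add: block_noise_0 sum_divide_distrib)
  then have "sqrt P0 * innovation 0 \<omega> N = (\<Sum>i\<le>N. xi0 i \<omega> - Xh0) / sqrt (real (Suc N))"
    using P0_pos unfolding innovation_top by simp
  moreover have "ens_m N A B C D X0 V W xi0 EV EW 0 \<omega> - Xh0 = (\<Sum>i\<le>N. xi0 i \<omega> - Xh0) / real (Suc N)"
    by (simp add: ens_m_def ens_xi_def smean_atMost sum_subtractf field_simps del: of_nat_Suc)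
  ultimately show ?thesis
    unfolding ens_u0_def by (simp only: sqrt_of_nat_mult_divide)
qed

lemma ens_u_eq: "ens_u N A B C D X0 V W xi0 EV EW n \<omega> = B * innovation (2 * n + 2) \<omega> N"
proof -
  have "(\<Sum>i\<le>N. block_noise (2 * n + 2) \<omega> i) = (\<Sum>i\<le>N. EW (Suc n) i \<omega>)"
    by (rule sum.cong[OF refl]) (simp add: block_noise_even)
  then have "B * innovation (2 * n + 2) \<omega> N = B * (\<Sum>i\<le>N. EW (Suc n) i \<omega>) / sqrt (real (Suc N))"
    unfolding innovation_top by simp
  moreover have "ens_m N A B C D X0 V W xi0 EV EW (Suc n) \<omega>
      = A * ens_mh N A B C D X0 V W xi0 EV EW n \<omega> + B * smean N (\<lambda>i. EW (Suc n) i \<omega>)"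
    unfolding ens_m_def ens_mh_def
    using smean_linear[of N A "ens_xih N A B C D X0 V W xi0 EV EW n \<omega>" B "\<lambda>i. EW (Suc n) i \<omega>" 0]
    by (simp add: ens_xi_Suc[abs_def])
  then have "ens_m N A B C D X0 V W xi0 EV EW (Suc n) \<omega> - A * ens_mh N A B C D X0 V W xi0 EV EW n \<omega>
      = B * (\<Sum>i\<le>N. EW (Suc n) i \<omega>) / real (Suc N)"
    by (simp add: smean_atMost)
  ultimately show ?thesis
    unfolding ens_u_def by (simp only: sqrt_of_nat_mult_divide)
qed

lemma ens_uh_eq:
  "ens_uh N A B C D X0 V W xi0 EV EW n \<omega>
    = - ens_g N A B C D X0 V W xi0 EV EW n \<omega> * D * ((\<Sum>i<Suc N. EV n i \<omega>) / sqrt (real (Suc N)))"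
proof -
  define x where "x = ens_xi N A B C D X0 V W xi0 EV EW n \<omega>"
  define y where "y = model_Y A B C D X0 W V n \<omega>"
  define g where "g = gain C D (svar N x)"
  have "ens_xih N A B C D X0 V W xi0 EV EW n \<omega> = (\<lambda>i. (1 - g * C) * x i + (- g * D) * EV n i \<omega> + g * y)"
    by (rule ext) (simp add: ens_xih_def enkf_update_def x_def y_def g_def algebra_simps)
  then have "ens_mh N A B C D X0 V W xi0 EV EW n \<omega>
      = (1 - g * C) * smean N x + (- g * D) * smean N (\<lambda>i. EV n i \<omega>) + g * y"
    unfolding ens_mh_def by (simp only: smean_linear)
  then have d: "ens_mh N A B C D X0 V W xi0 EV EW n \<omega> - smean N x - g * (y - C * smean N x)
      = - g * D * smean N (\<lambda>i. EV n i \<omega>)"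
    by (simp add: algebra_simps)
  have "ens_uh N A B C D X0 V W xi0 EV EW n \<omega> = sqrt (real (Suc N))
      * (- g * D * smean N (\<lambda>i. EV n i \<omega>))"
    unfolding ens_uh_def ens_m_def ens_g_def ens_p_def x_def[symmetric] y_def[symmetric]
        g_def[symmetric] d ..
  also have "\<dots> = - g * D * (sqrt (real (Suc N)) * ((\<Sum>i<Suc N. EV n i \<omega>) / real (Suc N)))"
    unfolding smean_def by simp
  also have "\<dots> = - g * D * ((\<Sum>i<Suc N. EV n i \<omega>) / sqrt (real (Suc N)))"
    by (simp only: sqrt_of_nat_mult_divide)
  finally show ?thesis
    by (simp only: ens_g_def ens_p_def x_def[symmetric] g_def[symmetric])
qed

lemma eta_eq: "(\<Sum>i<Suc N. EV n i \<omega>) / sqrt (real (Suc N)) = innovation (2 * n + 1) \<omega> N"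
proof -
  have "(\<Sum>i\<le>N. block_noise (2 * n + 1) \<omega> i) = (\<Sum>i\<le>N. EV n i \<omega>)"
    by (rule sum.cong[OF refl]) (simp add: block_noise_odd)
  then show ?thesis by (simp add: innovation_top lessThan_Suc_atMost)
qed

(* The chi-square Gaussians are the first N coordinates of the innovations; the mean
   perturbations are multiples of their last coordinates. *)

definition zidx_coord :: "zidx \<Rightarrow> nat \<times> nat" where
  "zidx_coord k = (case k of IZ0 i \<Rightarrow> (0, i) | IZh n i \<Rightarrow> (2 * n + 1, i) | IZ n i \<Rightarrow> (2 * n + 2, i)
     | IU0 \<Rightarrow> (0, N) | IEta n \<Rightarrow> (2 * n + 1, N) | IU n \<Rightarrow> (2 * n + 2, N))"

definition zidx_scale :: "zidx \<Rightarrow> real" where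
  "zidx_scale k = (case k of IU0 \<Rightarrow> sqrt P0 | IU n \<Rightarrow> B | _ \<Rightarrow> 1)"

lemma indep_innovations_perturbations:
  "indep_vars (\<lambda>_. borel)
     (\<lambda>k. case k of IZ0 i \<Rightarrow> (\<lambda>\<omega>. innovation 0 \<omega> i) | IZh n i \<Rightarrow> (\<lambda>\<omega>. innovation (2 * n + 1) \<omega> i)
        | IZ n i \<Rightarrow> (\<lambda>\<omega>. innovation (2 * n + 2) \<omega> i)
        | IU0 \<Rightarrow> ens_u0 N A B C D Xh0 X0 V W xi0 EV EW
        | IEta n \<Rightarrow> (\<lambda>\<omega>. (\<Sum>i<Suc N. EV n i \<omega>) / sqrt (real (Suc N)))
        | IU n \<Rightarrow> ens_u N A B C D X0 V W xi0 EV EW n)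
     ({IZ0 i |i. i < N} \<union> {IZh n i |n i. i < N} \<union> {IZ n i |n i. i < N} \<union> {IU0} \<union> range IEta \<union> range IU)"
  (is "indep_vars _ ?X ?K")
proof -
  have "zidx_coord ` ?K \<subseteq> UNIV \<times> {..N}"
    by (auto simp: zidx_coord_def)
  then have "indep_vars (\<lambda>_. borel) (\<lambda>j \<omega>. innovation (fst j) \<omega> (snd j)) (zidx_coord ` ?K)"
    by (rule indep_vars_subset[OF indep_vars_innovations])
  moreover have "inj_on zidx_coord ?K"
    by (rule inj_onI) (auto simp: zidx_coord_def split: zidx.splits; presburger)
  ultimately have "indep_vars (\<lambda>_. borel)
      (\<lambda>k \<omega>. innovation (fst (zidx_coord k)) \<omega> (snd (zidx_coord k))) ?K"
    by (rule indep_vars_reindex)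
  then have indep: "indep_vars (\<lambda>_. borel)
      (\<lambda>k \<omega>. zidx_scale k * innovation (fst (zidx_coord k)) \<omega> (snd (zidx_coord k))) ?K"
    by (rule indep_vars_compose2[where Y="\<lambda>k x. zidx_scale k * x"]) simp
  have "?X k = (\<lambda>\<omega>. zidx_scale k * innovation (fst (zidx_coord k)) \<omega> (snd (zidx_coord k)))" if
      "k \<in> ?K" for k
    using that by (auto simp: zidx_coord_def zidx_scale_def ens_u0_eq ens_u_eq eta_eq simp
        del: sum.lessThan_Suc of_nat_Suc)
  then show ?thesis
    by (rule indep_vars_cong[THEN iffD2, OF refl _ refl indep])
qed

end

theorem mainTheorem17:
  fixes M :: "'a measure" and A B C D P0 Xh0 :: real and N :: nat
    and X0 :: "'a \<Rightarrow> real" and V W :: "nat \<Rightarrow> 'a \<Rightarrow> real"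
    and xi0 :: "nat \<Rightarrow> 'a \<Rightarrow> real" and EV EW :: "nat \<Rightarrow> nat \<Rightarrow> 'a \<Rightarrow> real"
  assumes "prob_space M"
    and "A \<noteq> 0" and "B \<noteq> 0" and "C \<noteq> 0" and "D \<noteq> 0" and "P0 > 0" and "N \<ge> 1"
    and "distributed M lborel X0 (normal_density Xh0 (sqrt P0))"
    and "\<And>i. i \<le> N \<Longrightarrow> distributed M lborel (xi0 i) (normal_density Xh0 (sqrt P0))"
    and "\<And>n. distributed M lborel (V n) std_normal_density"
    and "\<And>n. n \<ge> 1 \<Longrightarrow> distributed M lborel (W n) std_normal_density"
    and "\<And>n i. i \<le> N \<Longrightarrow> distributed M lborel (EV n i) std_normal_density"
    and "\<And>n i. n \<ge> 1 \<Longrightarrow> i \<le> N \<Longrightarrow> distributed M lborel (EW n i) std_normal_density"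
    and "prob_space.indep_vars M (\<lambda>_. borel)
           (\<lambda>s. case s of SX0 \<Rightarrow> X0 | SV n \<Rightarrow> V n | SW n \<Rightarrow> W n | SXi i \<Rightarrow> xi0 i
                    | SEV n i \<Rightarrow> EV n i | SEW n i \<Rightarrow> EW n i)
           ({SX0} \<union> range SV \<union> SW ` {1..} \<union> SXi ` {..N}
             \<union> {SEV n i |n i. i \<le> N} \<union> {SEW n i |n i. 1 \<le> n \<and> i \<le> N})"
  defines "R \<equiv> B^2" and "S \<equiv> (C / D)^2"
    and "p \<equiv> ens_p N A B C D X0 V W xi0 EV EW" and "ph \<equiv> ens_ph N A B C D X0 V W xi0 EV EW"
    and "g \<equiv> ens_g N A B C D X0 V W xi0 EV EW"
    and "u0 \<equiv> ens_u0 N A B C D Xh0 X0 V W xi0 EV EW"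
    and "uh \<equiv> ens_uh N A B C D X0 V W xi0 EV EW"
    and "u \<equiv> ens_u N A B C D X0 V W xi0 EV EW"
    and "eta \<equiv> \<lambda>n \<omega>. (\<Sum>i<Suc N. EV n i \<omega>) / sqrt (real (Suc N))"
  shows "\<exists>Z0 Zh Z :: _ \<Rightarrow> _.
     prob_space.indep_vars M (\<lambda>_. borel)
       (\<lambda>k. case k of IZ0 i \<Rightarrow> Z0 i | IZh n i \<Rightarrow> Zh n i | IZ n i \<Rightarrow> Z n i
                | IU0 \<Rightarrow> u0 | IEta n \<Rightarrow> eta n | IU n \<Rightarrow> u n)
       ({IZ0 i |i. i < N} \<union> {IZh n i |n i. i < N} \<union> {IZ n i |n i. i < N}
         \<union> {IU0} \<union> range IEta \<union> range IU)
   \<and> (\<forall>i<N. distributed M lborel (Z0 i) std_normal_density)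
   \<and> (\<forall>n. \<forall>i<N. distributed M lborel (Zh n i) std_normal_density)
   \<and> (\<forall>n. \<forall>i<N. distributed M lborel (Z n i) std_normal_density)
   \<and> (AE \<omega> in M. p 0 \<omega> = P0 / real N * (\<Sum>i<N. (Z0 i \<omega>)^2))
   \<and> (\<forall>n. AE \<omega> in M. ph n \<omega> = (p n \<omega> / (1 + S * p n \<omega>))^2 * (S / real N)
            * (\<Sum>i<N. (Zh n i \<omega> + sqrt (1 / (S * p n \<omega>)))^2))
   \<and> (\<forall>n. AE \<omega> in M. p (Suc n) \<omega> = R / real N
            * (\<Sum>i<N. (Z n i \<omega> + sqrt (A^2 * ph n \<omega> / R))^2))
   \<and> (\<forall>n \<omega>. uh n \<omega> = - g n \<omega> * D * eta n \<omega>)"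
proof -
  interpret enkf_setting M A B C D P0 Xh0 N X0 V W xi0 EV EW
    by (intro enkf_setting.intro enkf_setting_axioms.intro) (use assms in auto)
  show ?thesis
  proof (intro exI conjI)
    show "indep_vars (\<lambda>_. borel)
       (\<lambda>k. case k of IZ0 i \<Rightarrow> (\<lambda>i \<omega>. innovation 0 \<omega> i) i
          | IZh n i \<Rightarrow> (\<lambda>n i \<omega>. innovation (2 * n + 1) \<omega> i) n i
          | IZ n i \<Rightarrow> (\<lambda>n i \<omega>. innovation (2 * n + 2) \<omega> i) n i
          | IU0 \<Rightarrow> u0 | IEta n \<Rightarrow> eta n | IU n \<Rightarrow> u n)
       ({IZ0 i |i. i < N} \<union> {IZh n i |n i. i < N} \<union> {IZ n i |n i. i < N}
         \<union> {IU0} \<union> range IEta \<union> range IU)"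
      unfolding u0_def u_def eta_def using indep_innovations_perturbations by simp
  qed (auto intro!: AE_I2 simp: distributed_innovation p_def ph_def g_def uh_def eta_def S_def R_def
      ens_p_0_eq ens_ph_eq ens_p_Suc_eq ens_uh_eq)
qed

end
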